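(* Let $A$ be a cirquent and let $B$ be a purification of $A$ (a final output of the Purification procedure applied to $A$). Then: (1) if $B$ is provable in $\mathbf{CL16}$, then so is $A$; (2) $A$ is valid iff $B$ is valid; (3) $B$ is pure; (4) $\overline{B}\le\overline{A}$.
   Context: Cirquents. Fix elementary letters $p,q,\dots$; literals are $p$ and $\neg p$. Fix disjoint infinite sets of disjunctive and conjunctive clusters. Cirquents: $\top,\bot$ and literals; if $A,B$ are cirquents then so are $A\vee B$, $A\wedge B$, $A\sqcap^cB$ ($c$ conjunctive), $A\sqcup^cB$ ($c$ disjunctive). A cluster $c$ occurs in a cirquent if some $\sqcup^c$ or $\sqcap^c$ occurs in it. A surface occurrence is one not in the scope of any choice connective. Semantics and validity. LegRuns is the set of (finite or infinite) sequences of labeled moves (each labeled $\top$ = machine or $\bot$ = environment) in which every move is $c.0$ or $c.1$ for a cluster $c$, moves in disjunctive clusters are $\top$-labeled, moves in conjunctive clusters are $\bot$-labeled, and each cluster has at most one move. For $\Gamma\in$ LegRuns, $A\sqcup^cB$ or $A\sqcap^cB$ is resolved if $\Gamma$ contains $c.0$ or $c.1$, with resolvent $A$ or $B$. An interpretation $^*$ assigns each letter a value in $\{\top,\bot\}$. $C^*$ is the game with legal runs LegRuns, a legal run $\Gamma$ being won by $\top$ iff: $C=\top$; or $C$ is $p$ (resp. $\neg p$) with $p^*=\top$ (resp. $\bot$); or $C=A_0\vee A_1$ and $\Gamma$ is won in some $A_i$; or $C=A_0\wedge A_1$ and won in both; or $C=A_0\sqcup^cA_1$ is resolved and $\Gamma$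 is won in the resolvent; or $C=A_0\sqcap^cA_1$ and it is unresolved or $\Gamma$ is won in the resolvent. Illegal runs are lost by the player who made the first illegal move. An HPM is a Turing machine with an extra read-only run tape showing the current run, able to make moves, against an environment that may move at any time; it solves a game if all runs it generates are won by $\top$. $C$ is valid if one HPM solves $C^*$ for all interpretations $^*$. Rules of $\mathbf{CL16}$ (premise(s) $\leadsto$ conclusion; $X[E_1,\dots,E_n]$ denotes a cirquent with fixed subcirquents $E_i$, $X[F_1,\dots,F_n]$ replaces all occurrences of the $E_i$ by the $F_i$, the conclusion setting the context): Commutativity $X[B\vee A]\leadsto X[A\vee B]$, $X[B\wedge A]\leadsto X[A\wedge B]$; Associativity $X[A\vee(B\vee C)]\leadsto X[(A\vee B)\vee C]$, $X[A\wedge(B\wedge C)]\leadsto X[(A\wedge B)\wedge C]$; Identity $X[A]\leadsto X[A\vee\bot]$, $X[A]\leadsto X[A\wedge\top]$; Domination $X[\top]\leadsto X[A\vee\top]$, $X[\bot]\leadsto X[A\wedge\bot]$; Choosing $X[A_1,\dots,A_n]\leadsto X[A_1\sqcup^cB_1,\dots,A_n\sqcup^cB_n]$ and $X[B_1,\dots,B_n]\leadsto X[A_1\sqcup^cB_1,\dots,A_n\sqcup^cB_n]$ where the $A_i\sqcup^cB_i$ are all $\sqcup^c$-rooted subcirquents of the conclusion; Cleansing $X[Y[A]\sqcap^cC]\leadsto X[Y[A\sqcap^cB]\sqcap^cC]$, $X[C\sqcap^cY[B]]\leadsto X[C\sqcap^cY[A\sqcap^cB]]$; Distribution $X[(A\vee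 C)\wedge(B\vee C)]\leadsto X[(A\wedge B)\vee C]$, $X[(A\vee C)\sqcap^c(B\vee C)]\leadsto X[(A\sqcap^cB)\vee C]$; Trivialization $X[\top]\leadsto X[\neg p\vee p]$; Quadrilemma $X\big[\big((A\wedge(C\sqcap^bD))\sqcap^a(B\wedge(C\sqcap^bD))\big)\sqcap^c\big(((A\sqcap^aB)\wedge C)\sqcap^b((A\sqcap^aB)\wedge D)\big)\big]\leadsto X[(A\sqcap^aB)\wedge(C\sqcap^bD)]$ with $c$ not in the conclusion; Splitting $A,\ B\leadsto A\sqcap^cB$ with $c$ in neither $A$ nor $B$. A proof of $C$ is a sequence $C_1=\top,\dots,C_n=C$ each of whose members after the first follows from earlier ones by a rule. Rank: tetration ${}^1a=a$, ${}^{n+1}a=a^{({}^na)}$; $\overline{C}=1$ for $\top,\bot$, literals; $\overline{A\sqcup^cB}=\overline{A\sqcap^cB}=\overline{A}+\overline{B}$; $\overline{A\wedge B}=5^{\overline{A}+\overline{B}}$; $\overline{A\vee B}={}^{(\overline{A}+\overline{B})}5$. Pure: a cirquent $D$ is pure iff (1) $D$ has no surface occurrence of $\bot$ unless $D=\bot$; (2) no surface occurrence of $\wedge$ is in the scope of $\vee$; (3) no surface occurrence of any $\sqcap^c$ is in the scope of $\vee$; (4) there is no surface occurrence of $A_1\vee\dots\vee A_n$ with both $p$ and $\neg p$ among $A_1,\dots,A_n$ for some letter $p$; (5) no surface occurrence of $\top$ unless $D=\top$; (6) if $D$ is $A_1\wedge\dots\wedge A_n$ ($n\ge2$, any bracketing)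 then some $A_i$ is not of the form $B\sqcap^cC$; (7) if $D$ is $A\sqcap^cB$ then neither $A$ nor $B$ contains $c$. Purification procedure applied to $D$: Stages 1–7 in order, each a loop iterated until it no longer modifies $D$; the final $D$ is returned. Stage 1: a surface occurrence of $\bot\vee A$ or $A\vee\bot$ is changed to $A$; next, of $\bot\wedge A$ or $A\wedge\bot$ to $\bot$. Stage 2: a surface occurrence of $(A\wedge B)\vee C$ or $C\vee(A\wedge B)$ is changed to $(A\vee C)\wedge(B\vee C)$. Stage 3: a surface occurrence of $(A\sqcap^cB)\vee C$ or $C\vee(A\sqcap^cB)$ is changed to $(A\vee C)\sqcap^c(B\vee C)$. Stage 4: a surface occurrence of $A_1\vee\dots\vee A_n$ with both $p,\neg p$ among the $A_i$ is changed to $\top$. Stage 5: a surface occurrence of $\top\vee A$ or $A\vee\top$ is changed to $\top$; next, of $\top\wedge A$ or $A\wedge\top$ to $A$. Stage 6: a surface occurrence of $(A\sqcap^aB)\wedge(E\sqcap^bF)$ is changed to $\big((A\wedge(E\sqcap^bF))\sqcap^a(B\wedge(E\sqcap^bF))\big)\sqcap^c\big(((A\sqcap^aB)\wedge E)\sqcap^b((A\sqcap^aB)\wedge F)\big)$ with $c$ a conjunctive cluster not occurring in $D$. Stage 7: if $D$ is $X[E\sqcap^cF]\sqcap^cA$ (resp. $A\sqcap^cX[E\sqcap^cF]$), change it to $X[E]\sqcap^cA$ (resp. $A\sqcap^cX[F]$). *)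

theory Defs
  imports Main
begin

text \<open>Clusters: disjunctive clusters Disj n and conjunctive clusters Conj n (two disjoint
infinite sets).  Elementary letters are natural numbers.\<close>

datatype cluster = Disj nat | Conj nat

text \<open>Cand c A B is A \<sqinter>^(Conj c) B; Cor c A B is A \<squnion>^(Disj c) B.\<close>

datatype cirq = Top | Bot | Pos nat | Neg nat
  | Or cirq cirq | And cirq cirq
  | Cand nat cirq cirq
  | Cor nat cirq cirq

fun clusters :: "cirq \<Rightarrow> cluster set" where
  "clusters (Or A B) = clusters A \<union> clusters B"
| "clusters (And A B) = clusters A \<union> clusters B"
| "clusters (Cand c A B) = {Conj c} \<union> clusters A \<union> clusters B"
| "clusters (Cor c A B) = {Disj c} \<union> clusters A \<union> clusters B"
| "clusters _ = {}"

datatype player = PTop | PBot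

text \<open>A move c.i is the pair (c, i) with False standing for 0 and True for 1.\<close>
type_synonym move = "cluster \<times> bool"
type_synonym lmove = "player \<times> move"

fun label_ok :: "lmove \<Rightarrow> bool" where
  "label_ok (p, (Disj _, _)) = (p = PTop)"
| "label_ok (p, (Conj _, _)) = (p = PBot)"

definition legal_list :: "lmove list \<Rightarrow> bool" where
  "legal_list l \<longleftrightarrow> (\<forall>i<length l. label_ok (l ! i) \<and>
      (\<forall>j<i. fst (snd (l ! j)) \<noteq> fst (snd (l ! i))))"

text \<open>Winning a legal run, given the set of (unlabelled) moves it contains
(a legal run contains at most one move per cluster).  An interpretation maps letters to
True (= \<top>) or False (= \<bottom>).\<close>

fun wins :: "(nat \<Rightarrow> bool) \<Rightarrow> move set \<Rightarrow> cirq \<Rightarrow> bool" where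
  "wins I M Top = True"
| "wins I M Bot = False"
| "wins I M (Pos p) = I p"
| "wins I M (Neg p) = (\<not> I p)"
| "wins I M (Or A B) = (wins I M A \<or> wins I M B)"
| "wins I M (And A B) = (wins I M A \<and> wins I M B)"
| "wins I M (Cor c A B) =
     (((Disj c, False) \<in> M \<and> wins I M A) \<or> ((Disj c, True) \<in> M \<and> wins I M B))"
| "wins I M (Cand c A B) =
     (if (Conj c, False) \<in> M then wins I M A
      else if (Conj c, True) \<in> M then wins I M B else True)"

text \<open>A (finite or infinite) run is given by the increasing chain R 0, R 1, ... of its
finite initial segments; the run is their limit.\<close>

definition won_run :: "(nat \<Rightarrow> bool) \<Rightarrow> cirq \<Rightarrow> (nat \<Rightarrow> lmove list) \<Rightarrow> bool" where
  "won_run I C R \<longleftrightarrow>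
     (if \<forall>t. legal_list (R t)
      then wins I (\<Union>t. snd ` set (R t)) C
      else (\<exists>t. \<not> legal_list (R t) \<and>
              fst (R t ! (LEAST k. \<not> legal_list (take (Suc k) (R t)))) = PBot))"

text \<open>Machines (HPMs), modelled as deterministic devices: at each clock cycle the machine,
as a function of the history of run-tape contents observed so far, makes at most one move;
the environment may make any finite list of moves at each cycle.\<close>

type_synonym machine = "lmove list list \<Rightarrow> move option"
type_synonym environment = "nat \<Rightarrow> move list"

primrec hist :: "machine \<Rightarrow> environment \<Rightarrow> nat \<Rightarrow> lmove list list" where
  "hist M E 0 = [[]]"
| "hist M E (Suc t) =
     (let h = hist M E t; r = last h
      in h @ [r @ (case M h of None \<Rightarrow> [] | Some m \<Rightarrow> [(PTop, m)])
                @ map (\<lambda>m. (PBot, m)) (E t)])"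

definition run_tape :: "machine \<Rightarrow> environment \<Rightarrow> nat \<Rightarrow> lmove list" where
  "run_tape M E t = last (hist M E t)"

definition valid :: "cirq \<Rightarrow> bool" where
  "valid C \<longleftrightarrow> (\<exists>M. \<forall>I E. won_run I C (run_tape M E))"

datatype ctx = Hole
  | COrL ctx cirq | COrR cirq ctx
  | CAndL ctx cirq | CAndR cirq ctx
  | CCandL nat ctx cirq | CCandR nat cirq ctx
  | CCorL nat ctx cirq | CCorR nat cirq ctx

fun fill :: "ctx \<Rightarrow> cirq \<Rightarrow> cirq" where
  "fill Hole E = E"
| "fill (COrL X B) E = Or (fill X E) B"
| "fill (COrR A X) E = Or A (fill X E)"
| "fill (CAndL X B) E = And (fill X E) B"
| "fill (CAndR A X) E = And A (fill X E)"
| "fill (CCandL c X B) E = Cand c (fill X E) B"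
| "fill (CCandR c A X) E = Cand c A (fill X E)"
| "fill (CCorL c X B) E = Cor c (fill X E) B"
| "fill (CCorR c A X) E = Cor c A (fill X E)"

fun surface_ctx :: "ctx \<Rightarrow> bool" where
  "surface_ctx Hole = True"
| "surface_ctx (COrL X _) = surface_ctx X"
| "surface_ctx (COrR _ X) = surface_ctx X"
| "surface_ctx (CAndL X _) = surface_ctx X"
| "surface_ctx (CAndR _ X) = surface_ctx X"
| "surface_ctx _ = False"

fun resolve :: "nat \<Rightarrow> bool \<Rightarrow> cirq \<Rightarrow> cirq" where
  "resolve c b (Or A B) = Or (resolve c b A) (resolve c b B)"
| "resolve c b (And A B) = And (resolve c b A) (resolve c b B)"
| "resolve c b (Cand d A B) = Cand d (resolve c b A) (resolve c b B)"
| "resolve c b (Cor d A B) =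
     (if d = c then (if b then resolve c b B else resolve c b A)
      else Cor d (resolve c b A) (resolve c b B))"
| "resolve c b X = X"

text \<open>One-premise rules: rule1 P Q means P \<leadsto> Q.\<close>
inductive rule1 :: "cirq \<Rightarrow> cirq \<Rightarrow> bool" where
  comm_or: "rule1 (fill X (Or B A)) (fill X (Or A B))"
| comm_and: "rule1 (fill X (And B A)) (fill X (And A B))"
| assoc_or: "rule1 (fill X (Or A (Or B C))) (fill X (Or (Or A B) C))"
| assoc_and: "rule1 (fill X (And A (And B C))) (fill X (And (And A B) C))"
| ident_or: "rule1 (fill X A) (fill X (Or A Bot))"
| ident_and: "rule1 (fill X A) (fill X (And A Top))"
| dom_or: "rule1 (fill X Top) (fill X (Or A Top))"
| dom_and: "rule1 (fill X Bot) (fill X (And A Bot))"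
| choosing: "rule1 (resolve c b C) C"
| cleansing_l: "rule1 (fill X (Cand c (fill Y A) C)) (fill X (Cand c (fill Y (Cand c A B)) C))"
| cleansing_r: "rule1 (fill X (Cand c C (fill Y B))) (fill X (Cand c C (fill Y (Cand c A B))))"
| distr_and: "rule1 (fill X (And (Or A C) (Or B C))) (fill X (Or (And A B) C))"
| distr_cand: "rule1 (fill X (Cand c (Or A C) (Or B C))) (fill X (Or (Cand c A B) C))"
| trivialization: "rule1 (fill X Top) (fill X (Or (Neg p) (Pos p)))"
| quadrilemma: "Conj c \<notin> clusters (fill X (And (Cand a A B) (Cand b C D))) \<Longrightarrow>
    rule1 (fill X (Cand c (Cand a (And A (Cand b C D)) (And B (Cand b C D)))
                          (Cand b (And (Cand a A B) C) (And (Cand a A B) D))))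
          (fill X (And (Cand a A B) (Cand b C D)))"

inductive provable :: "cirq \<Rightarrow> bool" where
  axiom: "provable Top"
| by_rule1: "provable P \<Longrightarrow> rule1 P C \<Longrightarrow> provable C"
| splitting: "provable A \<Longrightarrow> provable B \<Longrightarrow> Conj c \<notin> clusters A \<Longrightarrow> Conj c \<notin> clusters B
     \<Longrightarrow> provable (Cand c A B)"

text \<open>tet a n is the tetration of height n (tet a 0 = 1, so tet a 1 = a).\<close>
primrec tet :: "nat \<Rightarrow> nat \<Rightarrow> nat" where
  "tet a 0 = 1"
| "tet a (Suc n) = a ^ tet a n"

fun rank :: "cirq \<Rightarrow> nat" where
  "rank (Cor c A B) = rank A + rank B"
| "rank (Cand c A B) = rank A + rank B"
| "rank (And A B) = 5 ^ (rank A + rank B)"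
| "rank (Or A B) = tet 5 (rank A + rank B)"
| "rank _ = 1"

fun surf_subs :: "cirq \<Rightarrow> cirq set" where
  "surf_subs (Or A B) = {Or A B} \<union> surf_subs A \<union> surf_subs B"
| "surf_subs (And A B) = {And A B} \<union> surf_subs A \<union> surf_subs B"
| "surf_subs X = {X}"

fun disjuncts :: "cirq \<Rightarrow> cirq set" where
  "disjuncts (Or A B) = disjuncts A \<union> disjuncts B"
| "disjuncts X = {X}"

fun conjuncts :: "cirq \<Rightarrow> cirq set" where
  "conjuncts (And A B) = conjuncts A \<union> conjuncts B"
| "conjuncts X = {X}"

fun is_cand :: "cirq \<Rightarrow> bool" where
  "is_cand (Cand _ _ _) = True"
| "is_cand _ = False"

definition pure :: "cirq \<Rightarrow> bool" where
  "pure D \<longleftrightarrow>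
     (Bot \<in> surf_subs D \<longrightarrow> D = Bot) \<and>
     (\<forall>A B E F. Or A B \<in> surf_subs D \<longrightarrow> And E F \<notin> surf_subs A \<union> surf_subs B) \<and>
     (\<forall>A B c E F. Or A B \<in> surf_subs D \<longrightarrow> Cand c E F \<notin> surf_subs A \<union> surf_subs B) \<and>
     (\<forall>A B p. Or A B \<in> surf_subs D \<longrightarrow>
         \<not> (Pos p \<in> disjuncts (Or A B) \<and> Neg p \<in> disjuncts (Or A B))) \<and>
     (Top \<in> surf_subs D \<longrightarrow> D = Top) \<and>
     (\<forall>A B. D = And A B \<longrightarrow> (\<exists>E\<in>conjuncts D. \<not> is_cand E)) \<and>
     (\<forall>c A B. D = Cand c A B \<longrightarrow> Conj c \<notin> clusters A \<and> Conj c \<notin> clusters B)"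

definition s1a :: "cirq \<Rightarrow> cirq \<Rightarrow> bool" where
  "s1a D D' \<longleftrightarrow> (\<exists>X A. surface_ctx X \<and>
     (D = fill X (Or Bot A) \<or> D = fill X (Or A Bot)) \<and> D' = fill X A)"

definition s1b :: "cirq \<Rightarrow> cirq \<Rightarrow> bool" where
  "s1b D D' \<longleftrightarrow> (\<exists>X A. surface_ctx X \<and>
     (D = fill X (And Bot A) \<or> D = fill X (And A Bot)) \<and> D' = fill X Bot)"

definition s2 :: "cirq \<Rightarrow> cirq \<Rightarrow> bool" where
  "s2 D D' \<longleftrightarrow> (\<exists>X A B C. surface_ctx X \<and>
     (D = fill X (Or (And A B) C) \<or> D = fill X (Or C (And A B))) \<and>
     D' = fill X (And (Or A C) (Or B C)))"

definition s3 :: "cirq \<Rightarrow> cirq \<Rightarrow> bool" where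
  "s3 D D' \<longleftrightarrow> (\<exists>X c A B C. surface_ctx X \<and>
     (D = fill X (Or (Cand c A B) C) \<or> D = fill X (Or C (Cand c A B))) \<and>
     D' = fill X (Cand c (Or A C) (Or B C)))"

definition s4 :: "cirq \<Rightarrow> cirq \<Rightarrow> bool" where
  "s4 D D' \<longleftrightarrow> (\<exists>X A B p. surface_ctx X \<and> D = fill X (Or A B) \<and>
     Pos p \<in> disjuncts (Or A B) \<and> Neg p \<in> disjuncts (Or A B) \<and> D' = fill X Top)"

definition s5a :: "cirq \<Rightarrow> cirq \<Rightarrow> bool" where
  "s5a D D' \<longleftrightarrow> (\<exists>X A. surface_ctx X \<and>
     (D = fill X (Or Top A) \<or> D = fill X (Or A Top)) \<and> D' = fill X Top)"

definition s5b :: "cirq \<Rightarrow> cirq \<Rightarrow> bool" where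
  "s5b D D' \<longleftrightarrow> (\<exists>X A. surface_ctx X \<and>
     (D = fill X (And Top A) \<or> D = fill X (And A Top)) \<and> D' = fill X A)"

definition s6 :: "cirq \<Rightarrow> cirq \<Rightarrow> bool" where
  "s6 D D' \<longleftrightarrow> (\<exists>X a A B b E F c. surface_ctx X \<and>
     D = fill X (And (Cand a A B) (Cand b E F)) \<and> Conj c \<notin> clusters D \<and>
     D' = fill X (Cand c (Cand a (And A (Cand b E F)) (And B (Cand b E F)))
                         (Cand b (And (Cand a A B) E) (And (Cand a A B) F))))"

definition s7 :: "cirq \<Rightarrow> cirq \<Rightarrow> bool" where
  "s7 D D' \<longleftrightarrow> (\<exists>X c E F A.
     (D = Cand c (fill X (Cand c E F)) A \<and> D' = Cand c (fill X E) A) \<or>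
     (D = Cand c A (fill X (Cand c E F)) \<and> D' = Cand c A (fill X F)))"

definition opt_step :: "(cirq \<Rightarrow> cirq \<Rightarrow> bool) \<Rightarrow> cirq \<Rightarrow> cirq \<Rightarrow> bool" where
  "opt_step r D D' \<longleftrightarrow> (if \<exists>E. r D E then r D D' else D' = D)"

definition loop :: "(cirq \<Rightarrow> cirq \<Rightarrow> bool) \<Rightarrow> cirq \<Rightarrow> cirq \<Rightarrow> bool" where
  "loop it D D' \<longleftrightarrow> it\<^sup>*\<^sup>* D D' \<and> (\<forall>D''. it D' D'' \<longrightarrow> D'' = D')"

definition purification :: "cirq \<Rightarrow> cirq \<Rightarrow> bool" where
  "purification A B \<longleftrightarrow> (\<exists>D1 D2 D3 D4 D5 D6.
     loop (opt_step s1a OO opt_step s1b) A D1 \<and>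
     loop (opt_step s2) D1 D2 \<and>
     loop (opt_step s3) D2 D3 \<and>
     loop (opt_step s4) D3 D4 \<and>
     loop (opt_step s5a OO opt_step s5b) D4 D5 \<and>
     loop (opt_step s6) D5 D6 \<and>
     loop (opt_step s7) D6 B)"

end

theory Submission
  imports Defs
begin

(* Every step of the purification procedure is faithful: the cirquent before the step is
   derivable in CL16 from the one after it (the step undoes an instance of identity, domination,
   distribution, trivialization, quadrilemma or cleansing, up to commutativity), the two are won
   on the same runs, and the rank does not grow, because the tetration in the rank of a
   disjunction absorbs the duplication caused by distribution.  The quadrilemma step is the one
   exception for runs: there a machine for the result is turned into a machine for the original
   cirquent by translating runs, announcing the environment's first move in a or b by a move in
   the fresh cluster c.  Purity holds because every stage stops only when no redex of its kind is
   left, while preserving the normal forms produced by the earlier stages. *)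

section \<open>Contexts and derivations\<close>

fun ctx_comp :: "ctx \<Rightarrow> ctx \<Rightarrow> ctx" where
  "ctx_comp Hole Y = Y"
| "ctx_comp (COrL X B) Y = COrL (ctx_comp X Y) B"
| "ctx_comp (COrR A X) Y = COrR A (ctx_comp X Y)"
| "ctx_comp (CAndL X B) Y = CAndL (ctx_comp X Y) B"
| "ctx_comp (CAndR A X) Y = CAndR A (ctx_comp X Y)"
| "ctx_comp (CCandL c X B) Y = CCandL c (ctx_comp X Y) B"
| "ctx_comp (CCandR c A X) Y = CCandR c A (ctx_comp X Y)"
| "ctx_comp (CCorL c X B) Y = CCorL c (ctx_comp X Y) B"
| "ctx_comp (CCorR c A X) Y = CCorR c A (ctx_comp X Y)"

lemma fill_ctx_comp [simp]: "fill (ctx_comp X Y) E = fill X (fill Y E)"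
  by (induction X) auto

lemma surface_ctx_comp [simp]: "surface_ctx (ctx_comp X Y) \<longleftrightarrow> surface_ctx X \<and> surface_ctx Y"
  by (induction X) auto

lemma fill_eq_fill_iff [simp]: "fill X E = fill X E' \<longleftrightarrow> E = E'"
  by (induction X) auto

lemma fill_eq_atom:
  "fill X E = Top \<Longrightarrow> E = Top" "fill X E = Bot \<Longrightarrow> E = Bot"
  by (cases X; simp)+

lemma size_fill_less: "size E' < size E \<Longrightarrow> size (fill X E') < size (fill X E)"
  by (induction X) auto

lemma clusters_fill: "clusters E \<subseteq> clusters (fill X E)"
  by (induction X) auto

lemma ex_Cand_ctx_if_Conj_in_clusters:
  "Conj c \<in> clusters A \<Longrightarrow> \<exists>X E F. A = fill X (Cand c E F)"
proof (induction A)
  case (Or A1 A2)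
  then show ?case by (metis Un_iff clusters.simps(1) fill.simps(2,3))
next
  case (And A1 A2)
  then show ?case by (metis Un_iff clusters.simps(2) fill.simps(4,5))
next
  case (Cand d A1 A2)
  then show ?case by (metis Un_iff cluster.inject(2) clusters.simps(3) fill.simps(1,6,7) singletonD)
next
  case (Cor d A1 A2)
  then show ?case by (metis Un_iff cluster.distinct(1) clusters.simps(4) fill.simps(8,9) singletonD)
qed auto

lemma ex_fresh_Conj: "\<exists>c. Conj c \<notin> clusters D"
proof -
  have "finite (clusters D)"
    by (induction D) auto
  then have "finite (Conj -` clusters D)"
    by (rule finite_vimageI) (simp add: inj_on_def)
  then show ?thesis
    using ex_new_if_finite[OF infinite_UNIV_nat] by blast
qed

definition ctx_derives :: "cirq \<Rightarrow> cirq \<Rightarrow> bool" where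
  "ctx_derives P Q \<longleftrightarrow> (\<forall>X. rule1\<^sup>*\<^sup>* (fill X P) (fill X Q))"

lemma ctx_derives_refl: "ctx_derives P P"
  by (simp add: ctx_derives_def)

lemma ctx_derives_trans [trans]: "ctx_derives P Q \<Longrightarrow> ctx_derives Q S \<Longrightarrow> ctx_derives P S"
  unfolding ctx_derives_def by (meson rtranclp_trans)

lemma ctx_derives_fill: "ctx_derives P Q \<Longrightarrow> ctx_derives (fill Y P) (fill Y Q)"
  unfolding ctx_derives_def by (metis fill_ctx_comp)

lemma ctx_derivesI: "(\<And>X. rule1 (fill X P) (fill X Q)) \<Longrightarrow> ctx_derives P Q"
  unfolding ctx_derives_def by blast

lemma provable_ctx_derives: "ctx_derives P Q \<Longrightarrow> provable (fill X P) \<Longrightarrow> provable (fill X Q)"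
proof -
  assume "ctx_derives P Q"
  then have "rule1\<^sup>*\<^sup>* (fill X P) (fill X Q)"
    unfolding ctx_derives_def by blast
  then show "provable (fill X P) \<Longrightarrow> provable (fill X Q)"
    by (induction rule: rtranclp_induct) (auto intro: by_rule1)
qed

lemma ctx_derives_Or_commute: "ctx_derives (Or B A) (Or A B)"
  by (rule ctx_derivesI, rule comm_or)

lemma ctx_derives_Or_assoc: "ctx_derives (Or A (Or B C)) (Or (Or A B) C)"
  by (rule ctx_derivesI, rule assoc_or)

lemma ctx_derives_Or_assoc': "ctx_derives (Or (Or A B) C) (Or A (Or B C))"
proof -
  have "ctx_derives (Or (Or A B) C) (Or C (Or A B))" by (rule ctx_derives_Or_commute)
  also have "ctx_derives \<dots> (Or (Or C A) B)" by (rule ctx_derives_Or_assoc)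
  also have "ctx_derives \<dots> (Or B (Or C A))" by (rule ctx_derives_Or_commute)
  also have "ctx_derives \<dots> (Or (Or B C) A)" by (rule ctx_derives_Or_assoc)
  also have "ctx_derives \<dots> (Or A (Or B C))" by (rule ctx_derives_Or_commute)
  finally show ?thesis .
qed

lemma disjuncts_of_disjunct: "Q \<in> disjuncts A \<Longrightarrow> disjuncts Q = {Q}"
  by (induction A) auto

lemma ctx_derives_disjunct_last:
  "Q \<in> disjuncts A \<Longrightarrow> A \<noteq> Q \<Longrightarrow>
     \<exists>A'. ctx_derives (Or A' Q) A \<and> disjuncts A \<subseteq> disjuncts A' \<union> {Q}"
proof (induction A)
  case (Or A1 A2)
  show ?case
  proof (cases "Q \<in> disjuncts A1")
    case True
    show ?thesis
    proof (cases "A1 = Q")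
      case True
      then show ?thesis
        using ctx_derives_Or_commute[of A2 Q] disjuncts_of_disjunct[OF Or.prems(1)] by auto
    next
      case False
      with Or.IH(1) \<open>Q \<in> disjuncts A1\<close> obtain A1' where
        A1': "ctx_derives (Or A1' Q) A1" "disjuncts A1 \<subseteq> disjuncts A1' \<union> {Q}" by blast
      have "ctx_derives (Or (Or A1' A2) Q) (Or A1' (Or A2 Q))" by (rule ctx_derives_Or_assoc')
      also have "ctx_derives \<dots> (Or A1' (Or Q A2))"
        using ctx_derives_fill[OF ctx_derives_Or_commute, of "COrR A1' Hole"] by simp
      also have "ctx_derives \<dots> (Or (Or A1' Q) A2)" by (rule ctx_derives_Or_assoc)
      also have "ctx_derives \<dots> (Or A1 A2)"
        using ctx_derives_fill[OF A1'(1), of "COrL Hole A2"] by simp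
      finally show ?thesis using A1'(2) by (intro exI[of _ "Or A1' A2"]) auto
    qed
  next
    case False
    then have "Q \<in> disjuncts A2" using Or.prems by auto
    show ?thesis
    proof (cases "A2 = Q")
      case True
      then show ?thesis
        using ctx_derives_refl disjuncts_of_disjunct[OF Or.prems(1)] by auto
    next
      case False
      with Or.IH(2) \<open>Q \<in> disjuncts A2\<close> obtain A2' where
        A2': "ctx_derives (Or A2' Q) A2" "disjuncts A2 \<subseteq> disjuncts A2' \<union> {Q}" by blast
      have "ctx_derives (Or (Or A1 A2') Q) (Or A1 (Or A2' Q))" by (rule ctx_derives_Or_assoc')
      also have "ctx_derives \<dots> (Or A1 A2)"
        using ctx_derives_fill[OF A2'(1), of "COrR A1 Hole"] by simp
      finally show ?thesis using A2'(2) by (intro exI[of _ "Or A1 A2'"]) auto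
    qed
  qed
qed auto

lemma ctx_derives_Top_complementary:
  assumes pos: "Pos p \<in> disjuncts T" and neg: "Neg p \<in> disjuncts T"
  shows "ctx_derives Top T"
proof -
  have "T \<noteq> Pos p" using neg by auto
  with pos obtain T' where T':
    "ctx_derives (Or T' (Pos p)) T" "disjuncts T \<subseteq> disjuncts T' \<union> {Pos p}"
    using ctx_derives_disjunct_last by blast
  have triv: "ctx_derives Top (Or (Neg p) (Pos p))"
    by (rule ctx_derivesI, rule trivialization)
  show ?thesis
  proof (cases "T' = Neg p")
    case True
    then show ?thesis using triv T'(1) ctx_derives_trans by blast
  next
    case False
    moreover have "Neg p \<in> disjuncts T'" using T'(2) neg by auto
    ultimately obtain T'' where T'': "ctx_derives (Or T'' (Neg p)) T'"
      using ctx_derives_disjunct_last by blast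
    have "ctx_derives Top (Or T'' Top)" by (rule ctx_derivesI, rule dom_or)
    also have "ctx_derives \<dots> (Or T'' (Or (Neg p) (Pos p)))"
      using ctx_derives_fill[OF triv, of "COrR T'' Hole"] by simp
    also have "ctx_derives \<dots> (Or (Or T'' (Neg p)) (Pos p))" by (rule ctx_derives_Or_assoc)
    also have "ctx_derives \<dots> (Or T' (Pos p))"
      using ctx_derives_fill[OF T'', of "COrL Hole (Pos p)"] by simp
    also have "ctx_derives \<dots> T" by (rule T'(1))
    finally show ?thesis .
  qed
qed

section \<open>Rank\<close>

lemma less_pow5: "n < (5::nat) ^ n"
  using less_exp[of n] power_mono[of "2::nat" 5 n] by linarith

lemma double_le_pow5: "2 * n \<le> (5::nat) ^ n"
proof (induction n)
  case (Suc n)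
  then show ?case by (cases n) auto
qed simp

lemma tet5_pos: "0 < tet 5 n"
  by (induction n) auto

lemma less_tet5: "n < tet 5 n"
proof (induction n)
  case (Suc n)
  then show ?case using less_pow5[of "tet 5 n"] by simp
qed simp

lemma tet5_mono: "m \<le> n \<Longrightarrow> tet 5 m \<le> tet 5 n"
proof -
  have "tet 5 k \<le> tet 5 (Suc k)" for k
    using less_pow5[of "tet 5 k"] by simp
  then show "m \<le> n \<Longrightarrow> tet 5 m \<le> tet 5 n"
    by (rule lift_Suc_mono_le)
qed

lemma tet5_add_le:
  assumes "1 \<le> a" "1 \<le> b"
  shows "tet 5 (a + c) + tet 5 (b + c) \<le> tet 5 (a + b + c)"
proof -
  define m where "m = a + b + c - 1"
  have "a + c \<le> m" "b + c \<le> m"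
    using assms by (simp_all add: m_def)
  then have "tet 5 (a + c) + tet 5 (b + c) \<le> 2 * tet 5 m"
    by (metis add_mono mult_2 tet5_mono)
  also have "\<dots> \<le> tet 5 (Suc m)"
    using double_le_pow5 by simp
  also have "Suc m = a + b + c"
    using assms by (simp add: m_def)
  finally show ?thesis .
qed

lemma rank_pos: "1 \<le> rank C"
  by (induction C) (auto simp: Suc_le_eq tet5_pos)

lemma rank_fill_mono: "rank E' \<le> rank E \<Longrightarrow> rank (fill X E') \<le> rank (fill X E)"
  by (induction X) (auto intro: tet5_mono power_increasing)

lemma rank_le_Or: "rank A \<le> rank (Or A B)" "rank B \<le> rank (Or A B)"
  using less_tet5[of "rank A + rank B"] by auto

lemma rank_le_And: "rank A \<le> rank (And A B)" "rank B \<le> rank (And A B)"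
  using less_pow5[of "rank A + rank B"] by auto

text \<open>Distribution doubles C, but the tetration in the rank of \<or> absorbs it.\<close>

lemma rank_distrib_And_le: "rank (And (Or A C) (Or B C)) \<le> rank (Or (And A B) C)"
proof -
  let ?a = "rank A" and ?b = "rank B" and ?c = "rank C"
  define n where "n = 5 ^ (?a + ?b) + ?c - 1"
  have n: "5 ^ (?a + ?b) + ?c = Suc n" "?a + ?b + ?c \<le> n"
    using less_pow5[of "?a + ?b"] by (auto simp: n_def)
  have "rank (And (Or A C) (Or B C)) = 5 ^ (tet 5 (?a + ?c) + tet 5 (?b + ?c))" by simp
  also have "\<dots> \<le> 5 ^ tet 5 (?a + ?b + ?c)"
    using tet5_add_le[OF rank_pos rank_pos] by (intro power_increasing) auto
  also have "\<dots> \<le> 5 ^ tet 5 n" using n(2) by (intro power_increasing tet5_mono) auto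
  also have "\<dots> = rank (Or (And A B) C)" using n(1) by simp
  finally show ?thesis .
qed

lemma rank_distrib_Cand_le: "rank (Cand c (Or A C) (Or B C)) \<le> rank (Or (Cand c A B) C)"
  using tet5_add_le[OF rank_pos[of A] rank_pos[of B], of "rank C"] by simp

lemma rank_quadrilemma_le:
  "rank (Cand c (Cand a (And A (Cand b E F)) (And B (Cand b E F)))
                (Cand b (And (Cand a A B) E) (And (Cand a A B) F)))
     \<le> rank (And (Cand a A B) (Cand b E F))"
proof -
  define s where "s = rank A + rank B + rank E + rank F - 1"
  have s: "rank A + rank B + rank E + rank F = Suc s"
    using rank_pos[of A] by (simp add: s_def)
  have "(5::nat) ^ (rank A + (rank E + rank F)) \<le> 5 ^ s"
       "(5::nat) ^ (rank B + (rank E + rank F)) \<le> 5 ^ s"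
       "(5::nat) ^ (rank A + rank B + rank E) \<le> 5 ^ s"
       "(5::nat) ^ (rank A + rank B + rank F) \<le> 5 ^ s"
    using s rank_pos[of A] rank_pos[of B] rank_pos[of E] rank_pos[of F]
    by (intro power_increasing; simp)+
  moreover have "(5::nat) ^ (rank A + rank B + (rank E + rank F)) = 5 * 5 ^ s"
    using s by (simp add: add.assoc)
  ultimately show ?thesis
    unfolding rank.simps by linarith
qed

section \<open>Faithful steps\<close>

lemma wins_fill_cong: "wins I M E = wins I M E' \<Longrightarrow> wins I M (fill X E) = wins I M (fill X E')"
  by (induction X) auto

lemma wins_fill_mono: "(wins I M E \<Longrightarrow> wins I M E') \<Longrightarrow> wins I M (fill X E) \<Longrightarrow> wins I M (fill X E')"
  by (induction X) (auto split: if_splits)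

lemma wins_Or_disjuncts: "wins I M T \<longleftrightarrow> (\<exists>D\<in>disjuncts T. wins I M D)"
  by (induction T) auto

lemma wins_cong_clusters:
  "(\<And>k v. k \<in> clusters C \<Longrightarrow> (k, v) \<in> M \<longleftrightarrow> (k, v) \<in> M') \<Longrightarrow> wins I M C = wins I M' C"
  by (induction C) auto

lemma won_run_mono: "(\<And>M. wins I M D \<Longrightarrow> wins I M D') \<Longrightarrow> won_run I D R \<Longrightarrow> won_run I D' R"
  unfolding won_run_def by (auto split: if_splits)

lemma valid_mono: "(\<And>I M. wins I M D \<Longrightarrow> wins I M D') \<Longrightarrow> valid D \<Longrightarrow> valid D'"
  unfolding valid_def by (meson won_run_mono)

lemma valid_cong: "(\<And>I M. wins I M D = wins I M D') \<Longrightarrow> valid D = valid D'"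
  using valid_mono by blast

definition faithful :: "cirq \<Rightarrow> cirq \<Rightarrow> bool" where
  "faithful D D' \<longleftrightarrow> (provable D' \<longrightarrow> provable D) \<and> (valid D \<longleftrightarrow> valid D') \<and> rank D' \<le> rank D"

lemma faithful_refl: "faithful D D"
  by (simp add: faithful_def)

lemma faithful_trans: "faithful D1 D2 \<Longrightarrow> faithful D2 D3 \<Longrightarrow> faithful D1 D3"
  unfolding faithful_def by auto

lemma faithful_fillI:
  assumes "ctx_derives E' E" "\<And>I M. wins I M E = wins I M E'" "rank E' \<le> rank E"
  shows "faithful (fill X E) (fill X E')"
  unfolding faithful_def
  using provable_ctx_derives[OF assms(1)] valid_cong[OF wins_fill_cong[OF assms(2)]]
    rank_fill_mono[OF assms(3)] by blast

lemma faithful_Or_commute: "faithful (fill X (Or A B)) (fill X (Or B A))"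
  by (rule faithful_fillI[OF ctx_derives_Or_commute]) (auto simp: add.commute)

lemma faithful_And_commute: "faithful (fill X (And A B)) (fill X (And B A))"
  by (rule faithful_fillI[OF ctx_derivesI[OF comm_and]]) (auto simp: add.commute)

lemma faithful_s1a: "s1a D D' \<Longrightarrow> faithful D D'"
proof -
  have "faithful (fill X (Or A Bot)) (fill X A)" for X A
    by (rule faithful_fillI[OF ctx_derivesI[OF ident_or] _ rank_le_Or(1)]) simp
  then show "s1a D D' \<Longrightarrow> faithful D D'"
    unfolding s1a_def by (metis faithful_Or_commute faithful_trans)
qed

lemma faithful_s1b: "s1b D D' \<Longrightarrow> faithful D D'"
proof -
  have "faithful (fill X (And A Bot)) (fill X Bot)" for X A
    by (rule faithful_fillI[OF ctx_derivesI[OF dom_and] _ rank_le_And(2)]) simp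
  then show "s1b D D' \<Longrightarrow> faithful D D'"
    unfolding s1b_def by (metis faithful_And_commute faithful_trans)
qed

lemma faithful_s2: "s2 D D' \<Longrightarrow> faithful D D'"
proof -
  have "faithful (fill X (Or (And A B) C)) (fill X (And (Or A C) (Or B C)))" for X A B C
    by (rule faithful_fillI[OF ctx_derivesI[OF distr_and] _ rank_distrib_And_le]) auto
  then show "s2 D D' \<Longrightarrow> faithful D D'"
    unfolding s2_def by (metis faithful_Or_commute faithful_trans)
qed

lemma faithful_s3: "s3 D D' \<Longrightarrow> faithful D D'"
proof -
  have "faithful (fill X (Or (Cand c A B) C)) (fill X (Cand c (Or A C) (Or B C)))" for X c A B C
    by (rule faithful_fillI[OF ctx_derivesI[OF distr_cand] _ rank_distrib_Cand_le]) auto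
  then show "s3 D D' \<Longrightarrow> faithful D D'"
    unfolding s3_def by (metis faithful_Or_commute faithful_trans)
qed

lemma faithful_s4: "s4 D D' \<Longrightarrow> faithful D D'"
proof -
  have "faithful (fill X T) (fill X Top)"
    if "Pos p \<in> disjuncts T" "Neg p \<in> disjuncts T" for X T p
  proof (rule faithful_fillI[OF ctx_derives_Top_complementary[OF that]])
    show "wins I M T = wins I M Top" for I M
      using that wins_Or_disjuncts[of I M T] by (cases "I p") fastforce+
  qed (use rank_pos[of T] in simp)
  then show "s4 D D' \<Longrightarrow> faithful D D'"
    unfolding s4_def by blast
qed

lemma faithful_s5a: "s5a D D' \<Longrightarrow> faithful D D'"
proof -
  have "faithful (fill X (Or A Top)) (fill X Top)" for X A
    by (rule faithful_fillI[OF ctx_derivesI[OF dom_or]]) (simp_all add: rank_pos)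
  then show "s5a D D' \<Longrightarrow> faithful D D'"
    unfolding s5a_def by (metis faithful_Or_commute faithful_trans)
qed

lemma faithful_s5b: "s5b D D' \<Longrightarrow> faithful D D'"
proof -
  have "faithful (fill X (And A Top)) (fill X A)" for X A
    by (rule faithful_fillI[OF ctx_derivesI[OF ident_and] _ rank_le_And(1)]) simp
  then show "s5b D D' \<Longrightarrow> faithful D D'"
    unfolding s5b_def by (metis faithful_And_commute faithful_trans)
qed

lemma faithful_s7: "s7 D D' \<Longrightarrow> faithful D D'"
proof -
  have "faithful (fill Hole (Cand c (fill X (Cand c E F)) A)) (fill Hole (Cand c (fill X E) A))"
    for X c E F A
  proof (rule faithful_fillI)
    show "ctx_derives (Cand c (fill X E) A) (Cand c (fill X (Cand c E F)) A)"
      by (rule ctx_derivesI, rule cleansing_l)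
    show "wins I M (Cand c (fill X (Cand c E F)) A) = wins I M (Cand c (fill X E) A)" for I M
      using wins_fill_cong[of I M "Cand c E F" E X] by auto
  qed (simp add: rank_fill_mono)
  moreover have "faithful (fill Hole (Cand c A (fill X (Cand c E F)))) (fill Hole (Cand c A (fill X F)))"
    for X c E F A
  proof (rule faithful_fillI)
    show "ctx_derives (Cand c A (fill X F)) (Cand c A (fill X (Cand c E F)))"
      by (rule ctx_derivesI, rule cleansing_r)
    show "wins I M (Cand c A (fill X (Cand c E F))) = wins I M (Cand c A (fill X F))" for I M
      using wins_fill_cong[of I M "Cand c E F" F X] by auto
  qed (simp add: rank_fill_mono)
  ultimately show "s7 D D' \<Longrightarrow> faithful D D'"
    unfolding s7_def by auto
qed

section \<open>Validity of the quadrilemma step\<close>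

abbreviation clus :: "lmove \<Rightarrow> cluster" where
  "clus x \<equiv> fst (snd x)"

fun first_illegal :: "cluster set \<Rightarrow> lmove list \<Rightarrow> player option" where
  "first_illegal S [] = None"
| "first_illegal S (x # xs) =
     (if label_ok x \<and> clus x \<notin> S then first_illegal (insert (clus x) S) xs else Some (fst x))"

lemma legal_list_iff_distinct: "legal_list l \<longleftrightarrow> (\<forall>x\<in>set l. label_ok x) \<and> distinct (map clus l)"
  unfolding legal_list_def distinct_conv_nth all_set_conv_all_nth
  by (auto simp: nat_neq_iff) (metis nat_neq_iff)

lemma first_illegal_eq_None_iff:
  "first_illegal S l = None \<longleftrightarrow> (\<forall>x\<in>set l. label_ok x \<and> clus x \<notin> S) \<and> distinct (map clus l)"
  by (induction l arbitrary: S) (auto, fastforce+)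

lemma legal_list_iff_first_illegal: "legal_list l \<longleftrightarrow> first_illegal {} l = None"
  by (auto simp: legal_list_iff_distinct first_illegal_eq_None_iff)

lemma first_illegal_Least:
  "first_illegal S l = Some p \<Longrightarrow> fst (l ! (LEAST k. first_illegal S (take (Suc k) l) \<noteq> None)) = p"
proof (induction l arbitrary: S)
  case (Cons x xs)
  show ?case
  proof (cases "label_ok x \<and> clus x \<notin> S")
    case False
    then have "(LEAST k. first_illegal S (take (Suc k) (x # xs)) \<noteq> None) = 0"
      by (intro Least_equality) auto
    then show ?thesis using False Cons.prems by auto
  next
    case True
    let ?S = "insert (clus x) S"
    have "first_illegal S (take (Suc (length (x # xs))) (x # xs)) \<noteq> None"
      using Cons.prems by simp
    then have "(LEAST k. first_illegal S (take (Suc k) (x # xs)) \<noteq> None) =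
        Suc (LEAST k. first_illegal S (take (Suc (Suc k)) (x # xs)) \<noteq> None)"
      by (rule Least_Suc) (use True in simp)
    also have "(\<lambda>k. first_illegal S (take (Suc (Suc k)) (x # xs)) \<noteq> None) =
        (\<lambda>k. first_illegal ?S (take (Suc k) xs) \<noteq> None)"
      using True by simp
    finally show ?thesis using Cons.IH[of ?S] Cons.prems True by simp
  qed
qed simp

lemma won_run_iff_first_illegal:
  "won_run I C R \<longleftrightarrow>
     (if \<forall>t. first_illegal {} (R t) = None then wins I (\<Union>t. snd ` set (R t)) C
      else \<exists>t. first_illegal {} (R t) = Some PBot)"
proof -
  have "fst (l ! (LEAST k. \<not> legal_list (take (Suc k) l))) = PBot \<longleftrightarrow>
      first_illegal {} l = Some PBot" if "\<not> legal_list l" for l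
  proof -
    from that obtain p where "first_illegal {} l = Some p"
      by (auto simp: legal_list_iff_first_illegal)
    then show ?thesis
      using first_illegal_Least[of "{}" l p] by (simp add: legal_list_iff_first_illegal)
  qed
  then show ?thesis
    unfolding won_run_def by (auto simp: legal_list_iff_first_illegal)
qed

text \<open>A run of fill X (And (Cand a A B) (Cand b E F)) is translated into a run of its quadrilemma
  premise with the fresh cluster c: the environment's moves in c are dropped, and its first move in
  a (resp. b) is preceded by the move c.0 (resp. c.1).  The flag r records whether c has been
  resolved already.\<close>

fun quad_translate :: "nat \<Rightarrow> nat \<Rightarrow> nat \<Rightarrow> bool \<Rightarrow> lmove list \<Rightarrow> lmove list" where
  "quad_translate a b c r [] = []"
| "quad_translate a b c r (x # xs) =
     (if fst x = PBot \<and> clus x = Conj c then quad_translate a b c r xs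
      else if \<not> r \<and> fst x = PBot \<and> clus x = Conj a
        then (PBot, (Conj c, False)) # x # quad_translate a b c True xs
      else if \<not> r \<and> fst x = PBot \<and> clus x = Conj b
        then (PBot, (Conj c, True)) # x # quad_translate a b c True xs
      else x # quad_translate a b c r xs)"

fun quad_resolved :: "nat \<Rightarrow> nat \<Rightarrow> nat \<Rightarrow> bool \<Rightarrow> lmove list \<Rightarrow> bool" where
  "quad_resolved a b c r [] = r"
| "quad_resolved a b c r (x # xs) =
     quad_resolved a b c
       (r \<or> fst x = PBot \<and> clus x \<noteq> Conj c \<and> (clus x = Conj a \<or> clus x = Conj b)) xs"

lemma quad_translate_append:
  "quad_translate a b c r (xs @ ys) =
     quad_translate a b c r xs @ quad_translate a b c (quad_resolved a b c r xs) ys"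
  by (induction xs arbitrary: r) auto

lemma quad_translate_env_moves:
  "quad_translate a b c r (map (Pair PBot) ms) =
     map (Pair PBot) (map snd (quad_translate a b c r (map (Pair PBot) ms)))"
  by (induction ms arbitrary: r) auto

lemma quad_translate_machine_move:
  "quad_translate a b c r (case m of None \<Rightarrow> [] | Some m \<Rightarrow> [(PTop, m)]) =
     (case m of None \<Rightarrow> [] | Some m \<Rightarrow> [(PTop, m)])"
  "quad_resolved a b c r (case m of None \<Rightarrow> [] | Some m \<Rightarrow> [(PTop, m)]) = r"
  by (cases m; simp)+

text \<open>The machine for the original cirquent runs M' on translated histories; against it, M' then
  faces the translated environment sim_env and sees exactly the translated run (run_tape_sim).\<close>

definition sim_machine :: "nat \<Rightarrow> nat \<Rightarrow> nat \<Rightarrow> machine \<Rightarrow> machine" where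
  "sim_machine a b c M' = (\<lambda>h. M' (map (quad_translate a b c False) h))"

definition sim_env :: "nat \<Rightarrow> nat \<Rightarrow> nat \<Rightarrow> machine \<Rightarrow> environment \<Rightarrow> environment" where
  "sim_env a b c M' E = (\<lambda>t. map snd
     (quad_translate a b c (quad_resolved a b c False (run_tape (sim_machine a b c M') E t))
        (map (Pair PBot) (E t))))"

lemma hist_nonempty: "hist M E t \<noteq> []"
  by (cases t) (auto simp: Let_def)

lemma hist_sim:
  "hist M' (sim_env a b c M' E) t = map (quad_translate a b c False) (hist (sim_machine a b c M') E t)"
proof (induction t)
  case (Suc t)
  let ?H = "hist (sim_machine a b c M') E t"
  have env: "map (Pair PBot) (sim_env a b c M' E t) =
      quad_translate a b c (quad_resolved a b c False (last ?H)) (map (Pair PBot) (E t))"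
    unfolding sim_env_def run_tape_def by (rule quad_translate_env_moves[symmetric])
  show ?case
    using hist_nonempty[of "sim_machine a b c M'" E t]
    by (simp add: Let_def Suc.IH last_map sim_machine_def quad_translate_append
        quad_translate_machine_move env)
qed simp

lemma run_tape_sim:
  "run_tape M' (sim_env a b c M' E) t = quad_translate a b c False (run_tape (sim_machine a b c M') E t)"
  unfolding run_tape_def hist_sim using hist_nonempty by (simp add: last_map)

text \<open>Translation drops the environment's moves in c, so it can hide an illegal move of the
  environment, but never one of the machine.\<close>

lemma first_illegal_quad_translate:
  assumes "a \<noteq> c" "b \<noteq> c"
  shows "first_illegal S l \<noteq> Some PBot \<Longrightarrow> (\<forall>k. k \<noteq> Conj c \<longrightarrow> (k \<in> S \<longleftrightarrow> k \<in> S')) \<Longrightarrow>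
    (Conj c \<in> S' \<longleftrightarrow> r) \<Longrightarrow> first_illegal S' (quad_translate a b c r l) = first_illegal S l"
proof (induction l arbitrary: S S' r)
  case (Cons x xs)
  obtain p k v where x: "x = (p, (k, v))" by (cases x) auto
  show ?case
    using Cons x assms by (cases p; cases k) (auto intro!: Cons.IH)
qed simp

lemma mem_snd_image: "m \<in> snd ` A \<longleftrightarrow> (\<exists>p. (p, m) \<in> A)"
  by force

lemma quad_translate_other_move:
  "k \<noteq> Conj c \<Longrightarrow> (k, v) \<in> snd ` set (quad_translate a b c r l) \<longleftrightarrow> (k, v) \<in> snd ` set l"
  by (induction l arbitrary: r) auto

lemma quad_translate_c_move:
  "a \<noteq> c \<Longrightarrow> b \<noteq> c \<Longrightarrow> \<forall>x\<in>set l. label_ok x \<Longrightarrow>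
    (p, (Conj c, w)) \<in> set (quad_translate a b c r l) \<Longrightarrow>
    \<exists>q v. (q, (Conj (if w then b else a), v)) \<in> set l"
proof (induction l arbitrary: r)
  case (Cons x xs)
  obtain p k v where x: "x = (p, (k, v))" by (cases x) auto
  show ?case
    using Cons x by (cases p; cases k) (auto split: if_splits; blast)+
qed simp

lemma quad_translate_resolves:
  "a \<noteq> c \<Longrightarrow> b \<noteq> c \<Longrightarrow> \<forall>x\<in>set l. label_ok x \<Longrightarrow>
    (Conj a, v) \<in> snd ` set l \<or> (Conj b, v) \<in> snd ` set l \<Longrightarrow>
    \<exists>w. (Conj c, w) \<in> snd ` set (quad_translate a b c False l)"
proof (induction l)
  case (Cons x xs)
  obtain p k u where x: "x = (p, (k, u))" by (cases x) auto
  show ?case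
    using Cons x by (cases p; cases k) (auto simp: mem_snd_image)
qed simp

definition quad_simulates :: "nat \<Rightarrow> nat \<Rightarrow> nat \<Rightarrow> move set \<Rightarrow> move set \<Rightarrow> bool" where
  "quad_simulates a b c M M' \<longleftrightarrow>
     (\<forall>k v. k \<noteq> Conj c \<longrightarrow> ((k, v) \<in> M' \<longleftrightarrow> (k, v) \<in> M)) \<and>
     ((Conj c, False) \<in> M' \<longrightarrow> (\<exists>v. (Conj a, v) \<in> M)) \<and>
     ((Conj c, True) \<in> M' \<longrightarrow> (\<exists>v. (Conj b, v) \<in> M)) \<and>
     ((\<exists>v. (Conj a, v) \<in> M \<or> (Conj b, v) \<in> M) \<longrightarrow> (\<exists>w. (Conj c, w) \<in> M'))"

lemma quad_simulates_run:
  assumes "a \<noteq> c" "b \<noteq> c" and labels: "\<And>t. \<forall>x\<in>set (R t). label_ok x"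
  shows "quad_simulates a b c (\<Union>t. snd ` set (R t)) (\<Union>t. snd ` set (quad_translate a b c False (R t)))"
  unfolding quad_simulates_def
proof (intro conjI allI impI)
  show "(k, v) \<in> (\<Union>t. snd ` set (quad_translate a b c False (R t))) \<longleftrightarrow> (k, v) \<in> (\<Union>t. snd ` set (R t))"
    if "k \<noteq> Conj c" for k v
    by (simp add: quad_translate_other_move[OF that])
  have c_move: "\<exists>v. (Conj (if w then b else a), v) \<in> (\<Union>t. snd ` set (R t))"
    if "(Conj c, w) \<in> (\<Union>t. snd ` set (quad_translate a b c False (R t)))" for w
  proof -
    from that obtain t p where "(p, (Conj c, w)) \<in> set (quad_translate a b c False (R t))"
      by (auto simp: mem_snd_image)
    then have "\<exists>q v. (q, (Conj (if w then b else a), v)) \<in> set (R t)"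
      by (rule quad_translate_c_move[OF assms(1,2) labels])
    then obtain q v where "(q, (Conj (if w then b else a), v)) \<in> set (R t)"
      by blast
    then have "(Conj (if w then b else a), v) \<in> snd ` set (R t)"
      by (rule rev_image_eqI) simp
    then show ?thesis
      by (intro exI[of _ v]) (rule UN_I[OF UNIV_I])
  qed
  show "\<exists>v. (Conj a, v) \<in> (\<Union>t. snd ` set (R t))"
    if "(Conj c, False) \<in> (\<Union>t. snd ` set (quad_translate a b c False (R t)))"
    using c_move[OF that] by simp
  show "\<exists>v. (Conj b, v) \<in> (\<Union>t. snd ` set (R t))"
    if "(Conj c, True) \<in> (\<Union>t. snd ` set (quad_translate a b c False (R t)))"
    using c_move[OF that] by simp
  show "\<exists>w. (Conj c, w) \<in> (\<Union>t. snd ` set (quad_translate a b c False (R t)))"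
    if "\<exists>v. (Conj a, v) \<in> (\<Union>t. snd ` set (R t)) \<or> (Conj b, v) \<in> (\<Union>t. snd ` set (R t))"
  proof -
    from that obtain v t where "(Conj a, v) \<in> snd ` set (R t) \<or> (Conj b, v) \<in> snd ` set (R t)"
      by blast
    then have "\<exists>w. (Conj c, w) \<in> snd ` set (quad_translate a b c False (R t))"
      by (rule quad_translate_resolves[OF assms(1,2) labels])
    then show ?thesis
      by blast
  qed
qed

lemma won_run_quad_translate:
  assumes "a \<noteq> c" "b \<noteq> c"
    and wins_back: "\<And>M M'. quad_simulates a b c M M' \<Longrightarrow> wins I M' D' \<Longrightarrow> wins I M D"
    and won: "won_run I D' (\<lambda>t. quad_translate a b c False (R t))"
  shows "won_run I D R"
proof -
  have same_first_illegal:
    "first_illegal {} (quad_translate a b c False (R t)) = first_illegal {} (R t)"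
    if "first_illegal {} (R t) \<noteq> Some PBot" for t
    using that by (rule first_illegal_quad_translate[OF assms(1,2)]) auto
  show ?thesis
  proof (cases "\<forall>t. first_illegal {} (R t) = None")
    case True
    then have "wins I (\<Union>t. snd ` set (quad_translate a b c False (R t))) D'"
      using won same_first_illegal unfolding won_run_iff_first_illegal by simp
    moreover have "\<forall>x\<in>set (R t). label_ok x" for t
      using True first_illegal_eq_None_iff by blast
    then have "quad_simulates a b c (\<Union>t. snd ` set (R t))
        (\<Union>t. snd ` set (quad_translate a b c False (R t)))"
      by (intro quad_simulates_run[OF assms(1,2)])
    ultimately show ?thesis
      using True wins_back unfolding won_run_iff_first_illegal by simp
  next
    case False
    show ?thesis
    proof (rule ccontr)
      assume "\<not> won_run I D R"
      then have no_PBot: "first_illegal {} (R t) \<noteq> Some PBot" for t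
        using False unfolding won_run_iff_first_illegal by auto
      then show False
        using won False same_first_illegal unfolding won_run_iff_first_illegal by simp
    qed
  qed
qed

lemma wins_cong_off_cluster:
  assumes "\<forall>k v. k \<noteq> Conj c \<longrightarrow> ((k, v) \<in> M' \<longleftrightarrow> (k, v) \<in> M)" "Conj c \<notin> clusters C"
  shows "wins I M' C = wins I M C"
proof (rule wins_cong_clusters)
  fix k v
  assume "k \<in> clusters C"
  then have "k \<noteq> Conj c" using assms(2) by auto
  then show "(k, v) \<in> M' \<longleftrightarrow> (k, v) \<in> M" using assms(1) by blast
qed

lemma wins_fill_transfer:
  assumes agree: "\<forall>k v. k \<noteq> Conj c \<longrightarrow> ((k, v) \<in> M' \<longleftrightarrow> (k, v) \<in> M)"
    and fresh: "Conj c \<notin> clusters (fill X Q)"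
    and root: "wins I M' P \<Longrightarrow> wins I M Q"
  shows "wins I M' (fill X P) \<Longrightarrow> wins I M (fill X Q)"
  using fresh
proof (induction X)
  case (COrL X B)
  then show ?case using wins_cong_off_cluster[OF agree, of B] by auto
next
  case (COrR B X)
  then show ?case using wins_cong_off_cluster[OF agree, of B] by auto
next
  case (CAndL X B)
  then show ?case using wins_cong_off_cluster[OF agree, of B] by auto
next
  case (CAndR B X)
  then show ?case using wins_cong_off_cluster[OF agree, of B] by auto
next
  case (CCandL d X B)
  then show ?case using wins_cong_off_cluster[OF agree, of B] agree by (auto split: if_splits)
next
  case (CCandR d B X)
  then show ?case using wins_cong_off_cluster[OF agree, of B] agree by (auto split: if_splits)
next
  case (CCorL d X B)
  then show ?case using wins_cong_off_cluster[OF agree, of B] agree by auto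
next
  case (CCorR d B X)
  then show ?case using wins_cong_off_cluster[OF agree, of B] agree by auto
qed (use root in simp)

lemma wins_Cand_And_right:
  "(\<exists>v. (Conj a, v) \<in> M) \<Longrightarrow> wins I M (Cand a (And A Q) (And B Q)) \<longleftrightarrow> wins I M (Cand a A B) \<and> wins I M Q"
  by (auto split: if_splits) (metis (full_types))

lemma wins_Cand_And_left:
  "(\<exists>v. (Conj b, v) \<in> M) \<Longrightarrow> wins I M (Cand b (And P E) (And P F)) \<longleftrightarrow> wins I M P \<and> wins I M (Cand b E F)"
  by (auto split: if_splits) (metis (full_types))

lemma wins_quadrilemma_back:
  assumes sim: "quad_simulates a b c M M'"
    and fresh: "Conj c \<notin> clusters (And (Cand a A B) (Cand b E F))"
    and w: "wins I M' (Cand c (Cand a (And A (Cand b E F)) (And B (Cand b E F)))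
                               (Cand b (And (Cand a A B) E) (And (Cand a A B) F)))"
  shows "wins I M (And (Cand a A B) (Cand b E F))"
proof -
  have agree: "\<forall>k v. k \<noteq> Conj c \<longrightarrow> ((k, v) \<in> M' \<longleftrightarrow> (k, v) \<in> M)"
    using sim by (simp add: quad_simulates_def)
  have same: "wins I M' (Cand a A B) = wins I M (Cand a A B)"
    "wins I M' (Cand b E F) = wins I M (Cand b E F)"
    by (rule wins_cong_off_cluster[OF agree], use fresh in simp)+
  have moved: "(\<exists>v. (Conj a, v) \<in> M') \<longleftrightarrow> (\<exists>v. (Conj a, v) \<in> M)"
    "(\<exists>v. (Conj b, v) \<in> M') \<longleftrightarrow> (\<exists>v. (Conj b, v) \<in> M)"
    using agree fresh by auto
  consider (left) "(Conj c, False) \<in> M'" | (right) "(Conj c, False) \<notin> M'" "(Conj c, True) \<in> M'"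
    | (unresolved) "\<forall>w. (Conj c, w) \<notin> M'"
    by (metis (full_types))
  then show ?thesis
  proof cases
    case left
    then have "\<exists>v. (Conj a, v) \<in> M'"
      using sim moved unfolding quad_simulates_def by blast
    moreover have "wins I M' (Cand a (And A (Cand b E F)) (And B (Cand b E F)))"
      using w left by (simp only: wins.simps(8) if_True)
    ultimately show ?thesis
      using same wins_Cand_And_right by (metis wins.simps(6))
  next
    case right
    then have "\<exists>v. (Conj b, v) \<in> M'"
      using sim moved unfolding quad_simulates_def by blast
    moreover have "wins I M' (Cand b (And (Cand a A B) E) (And (Cand a A B) F))"
      using w right by (simp only: wins.simps(8) if_True if_False)
    ultimately show ?thesis
      using same wins_Cand_And_left by (metis wins.simps(6))
  next
    case unresolved
    then have "\<forall>v. (Conj a, v) \<notin> M \<and> (Conj b, v) \<notin> M"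
      using sim unfolding quad_simulates_def by blast
    then show ?thesis
      by simp
  qed
qed

lemma valid_quadrilemma_back:
  assumes fresh: "Conj c \<notin> clusters (fill X (And (Cand a A B) (Cand b E F)))"
    and valid: "valid (fill X (Cand c (Cand a (And A (Cand b E F)) (And B (Cand b E F)))
                                     (Cand b (And (Cand a A B) E) (And (Cand a A B) F))))"
  shows "valid (fill X (And (Cand a A B) (Cand b E F)))"
proof -
  let ?L = "And (Cand a A B) (Cand b E F)"
  let ?R = "Cand c (Cand a (And A (Cand b E F)) (And B (Cand b E F)))
                   (Cand b (And (Cand a A B) E) (And (Cand a A B) F))"
  have fresh_root: "Conj c \<notin> clusters ?L"
    using fresh clusters_fill by blast
  then have "a \<noteq> c" "b \<noteq> c"
    by auto
  obtain M' where M': "\<And>I Env. won_run I (fill X ?R) (run_tape M' Env)"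
    using valid unfolding valid_def by blast
  have "won_run I (fill X ?L) (run_tape (sim_machine a b c M') Env)" for I Env
  proof (rule won_run_quad_translate[OF \<open>a \<noteq> c\<close> \<open>b \<noteq> c\<close>])
    show "won_run I (fill X ?R) (\<lambda>t. quad_translate a b c False (run_tape (sim_machine a b c M') Env t))"
      using M'[of I "sim_env a b c M' Env"] by (simp add: run_tape_sim[abs_def])
    show "wins I M (fill X ?L)" if "quad_simulates a b c M N" "wins I N (fill X ?R)" for M N
    proof (rule wins_fill_transfer[OF _ fresh _ that(2)])
      show "\<forall>k v. k \<noteq> Conj c \<longrightarrow> ((k, v) \<in> N \<longleftrightarrow> (k, v) \<in> M)"
        using that(1) by (simp add: quad_simulates_def)
      show "wins I N ?R \<Longrightarrow> wins I M ?L"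
        by (rule wins_quadrilemma_back[OF that(1) fresh_root])
    qed
  qed
  then show ?thesis
    unfolding valid_def by blast
qed

lemma faithful_s6: "s6 D D' \<Longrightarrow> faithful D D'"
  unfolding s6_def
proof (elim exE conjE)
  fix X a A B b E F c
  assume D: "D = fill X (And (Cand a A B) (Cand b E F))" and fresh: "Conj c \<notin> clusters D"
    and D': "D' = fill X (Cand c (Cand a (And A (Cand b E F)) (And B (Cand b E F)))
                                 (Cand b (And (Cand a A B) E) (And (Cand a A B) F)))"
  have "provable D' \<longrightarrow> provable D"
    using D D' fresh by (auto intro: by_rule1 quadrilemma)
  moreover have "valid D \<Longrightarrow> valid D'"
    unfolding D D' by (rule valid_mono, rule wins_fill_mono) (auto split: if_splits)
  moreover have "valid D' \<Longrightarrow> valid D"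
    using valid_quadrilemma_back fresh unfolding D D' by blast
  moreover have "rank D' \<le> rank D"
    unfolding D D' by (rule rank_fill_mono[OF rank_quadrilemma_le])
  ultimately show "faithful D D'"
    unfolding faithful_def by blast
qed

section \<open>Loops\<close>

lemma opt_step_invariant:
  assumes "opt_step r x y" "P x" and step: "\<And>x y. r x y \<Longrightarrow> P x \<Longrightarrow> P y"
  shows "P y"
  using assms unfolding opt_step_def by (auto split: if_splits)

lemma loop_invariant:
  assumes "loop it x y" "P x" and step: "\<And>x y. it x y \<Longrightarrow> P x \<Longrightarrow> P y"
  shows "P y"
proof -
  have "it\<^sup>*\<^sup>* x y" using \<open>loop it x y\<close> by (simp add: loop_def)
  then show ?thesis using \<open>P x\<close> by induction (auto intro: step)
qed

lemma loop_opt_step_invariant: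
  assumes "loop (opt_step r) x y" "P x" and step: "\<And>x y. r x y \<Longrightarrow> P x \<Longrightarrow> P y"
  shows "P y"
proof (rule loop_invariant[where P = P, OF assms(1,2)])
  fix x y assume "opt_step r x y" "P x"
  then show "P y" using step by (rule opt_step_invariant)
qed

lemma loop_opt_step_OO_invariant:
  assumes "loop (opt_step r OO opt_step r') x y" "P x"
    and step1: "\<And>x y. r x y \<Longrightarrow> P x \<Longrightarrow> P y" and step2: "\<And>x y. r' x y \<Longrightarrow> P x \<Longrightarrow> P y"
  shows "P y"
proof (rule loop_invariant[where P = P, OF assms(1,2)])
  fix x y assume "(opt_step r OO opt_step r') x y" "P x"
  then obtain z where z: "opt_step r x z" "opt_step r' z y" by blast
  have "P z" using z(1) \<open>P x\<close> step1 by (rule opt_step_invariant)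
  with z(2) show "P y" using step2 by (rule opt_step_invariant)
qed

definition redex_free :: "(cirq \<Rightarrow> cirq \<Rightarrow> bool) \<Rightarrow> cirq \<Rightarrow> bool" where
  "redex_free r D \<longleftrightarrow> (\<forall>E. \<not> r D E)"

lemma loop_opt_step_redex_free:
  "loop (opt_step r) D D' \<Longrightarrow> (\<And>x y. r x y \<Longrightarrow> y \<noteq> x) \<Longrightarrow> redex_free r D'"
  unfolding loop_def redex_free_def opt_step_def by (metis (full_types))

text \<open>A pass of the loop body that performs a step strictly shrinks the cirquent, so the loop can
  only stop once neither step applies.\<close>

lemma loop_opt_step_OO_redex_free:
  assumes loop: "loop (opt_step r OO opt_step r') D D'"
    and shrink1: "\<And>x y. r x y \<Longrightarrow> size y < size x"
    and shrink2: "\<And>x y. r' x y \<Longrightarrow> size y < size x"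
  shows "redex_free r D' \<and> redex_free r' D'"
proof -
  have fixed: "\<And>D''. (opt_step r OO opt_step r') D' D'' \<Longrightarrow> D'' = D'"
    using loop unfolding loop_def by blast
  have opt2: "\<exists>E'. opt_step r' E E' \<and> size E' \<le> size E" for E
    using shrink2 unfolding opt_step_def by (metis less_imp_le order_refl)
  have free1: "redex_free r D'"
    unfolding redex_free_def
  proof (intro allI notI)
    fix E assume "r D' E"
    then have "opt_step r D' E"
      unfolding opt_step_def by auto
    moreover obtain E' where "opt_step r' E E'" "size E' \<le> size E"
      using opt2 by blast
    ultimately have "E' = D'"
      using fixed by blast
    then show False
      using shrink1[OF \<open>r D' E\<close>] \<open>size E' \<le> size E\<close> by simp
  qed
  moreover have "redex_free r' D'"
    unfolding redex_free_def
  proof (intro allI notI)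
    fix E assume "r' D' E"
    have "opt_step r D' D'"
      using free1 unfolding opt_step_def redex_free_def by auto
    moreover have "opt_step r' D' E"
      using \<open>r' D' E\<close> unfolding opt_step_def by auto
    ultimately have "E = D'"
      using fixed by blast
    then show False using shrink2 \<open>r' D' E\<close> by fastforce
  qed
  ultimately show ?thesis by blast
qed

lemma s1a_shrinks: "s1a D D' \<Longrightarrow> size D' < size D"
  unfolding s1a_def by (auto intro!: size_fill_less)

lemma s1b_shrinks: "s1b D D' \<Longrightarrow> size D' < size D"
  unfolding s1b_def by (auto intro!: size_fill_less)

lemma s5a_shrinks: "s5a D D' \<Longrightarrow> size D' < size D"
  unfolding s5a_def by (auto intro!: size_fill_less)

lemma s5b_shrinks: "s5b D D' \<Longrightarrow> size D' < size D"
  unfolding s5b_def by (auto intro!: size_fill_less)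

lemma s2_changes: "s2 D D' \<Longrightarrow> D' \<noteq> D"
  unfolding s2_def by auto

lemma s3_changes: "s3 D D' \<Longrightarrow> D' \<noteq> D"
  unfolding s3_def by auto

lemma s4_changes: "s4 D D' \<Longrightarrow> D' \<noteq> D"
  unfolding s4_def by auto

lemma s6_changes: "s6 D D' \<Longrightarrow> D' \<noteq> D"
  unfolding s6_def by auto

lemma s7_changes: "s7 D D' \<Longrightarrow> D' \<noteq> D"
proof -
  have "size E < size (Cand c E F)" "size F < size (Cand c E F)" for c E F
    by simp_all
  then have "Cand c E F \<noteq> E" "Cand c E F \<noteq> F" for c E F
    by (metis less_irrefl)+
  then show "s7 D D' \<Longrightarrow> D' \<noteq> D"
    unfolding s7_def by auto
qed

lemma faithful_loop_opt_step:
  assumes "loop (opt_step r) D D'" and step: "\<And>x y. r x y \<Longrightarrow> faithful x y"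
  shows "faithful D D'"
proof (rule loop_opt_step_invariant[where P = "faithful D", OF assms(1) faithful_refl])
  show "faithful D y" if "r x y" "faithful D x" for x y
    using that step faithful_trans by blast
qed

lemma faithful_loop_opt_step_OO:
  assumes "loop (opt_step r OO opt_step r') D D'"
    and step1: "\<And>x y. r x y \<Longrightarrow> faithful x y" and step2: "\<And>x y. r' x y \<Longrightarrow> faithful x y"
  shows "faithful D D'"
proof (rule loop_opt_step_OO_invariant[where P = "faithful D", OF assms(1) faithful_refl])
  show "faithful D y" if "r x y" "faithful D x" for x y
    using that step1 faithful_trans by blast
  show "faithful D y" if "r' x y" "faithful D x" for x y
    using that step2 faithful_trans by blast
qed

lemma faithful_purification: "purification A B \<Longrightarrow> faithful A B"
  unfolding purification_def
proof (elim exE conjE)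
  fix D1 D2 D3 D4 D5 D6
  assume l1: "loop (opt_step s1a OO opt_step s1b) A D1" and l2: "loop (opt_step s2) D1 D2"
    and l3: "loop (opt_step s3) D2 D3" and l4: "loop (opt_step s4) D3 D4"
    and l5: "loop (opt_step s5a OO opt_step s5b) D4 D5" and l6: "loop (opt_step s6) D5 D6"
    and l7: "loop (opt_step s7) D6 B"
  have "faithful A D1"
    using l1 by (rule faithful_loop_opt_step_OO) (fact faithful_s1a faithful_s1b)+
  moreover have "faithful D1 D2"
    using l2 by (rule faithful_loop_opt_step) (fact faithful_s2)
  moreover have "faithful D2 D3"
    using l3 by (rule faithful_loop_opt_step) (fact faithful_s3)
  moreover have "faithful D3 D4"
    using l4 by (rule faithful_loop_opt_step) (fact faithful_s4)
  moreover have "faithful D4 D5"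
    using l5 by (rule faithful_loop_opt_step_OO) (fact faithful_s5a faithful_s5b)+
  moreover have "faithful D5 D6"
    using l6 by (rule faithful_loop_opt_step) (fact faithful_s6)
  moreover have "faithful D6 B"
    using l7 by (rule faithful_loop_opt_step) (fact faithful_s7)
  ultimately show "faithful A B"
    using faithful_trans by blast
qed

section \<open>Purity\<close>

text \<open>The normal forms established by the stages, with the purity conditions they give:
  surface_isolated Bot (stage 1, condition (1)), cnf (stage 2), clausal (stage 3, conditions (2)
  and (3)), no_complementary (stage 4, condition (4)), surface_isolated Top (stage 5,
  condition (5)) and some_conjunct_not_cand (stage 6, condition (6)).\<close>

definition surface_isolated :: "cirq \<Rightarrow> cirq \<Rightarrow> bool" where
  "surface_isolated U D \<longleftrightarrow> (U \<in> surf_subs D \<longrightarrow> D = U)"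

fun and_free :: "cirq \<Rightarrow> bool" where
  "and_free (Or A B) \<longleftrightarrow> and_free A \<and> and_free B"
| "and_free (And A B) \<longleftrightarrow> False"
| "and_free _ \<longleftrightarrow> True"

fun cnf :: "cirq \<Rightarrow> bool" where
  "cnf (And A B) \<longleftrightarrow> cnf A \<and> cnf B"
| "cnf X \<longleftrightarrow> and_free X"

fun clause :: "cirq \<Rightarrow> bool" where
  "clause (Or A B) \<longleftrightarrow> clause A \<and> clause B"
| "clause (And A B) \<longleftrightarrow> False"
| "clause (Cand c A B) \<longleftrightarrow> False"
| "clause _ \<longleftrightarrow> True"

fun clausal :: "cirq \<Rightarrow> bool" where
  "clausal (And A B) \<longleftrightarrow> clausal A \<and> clausal B"
| "clausal (Cand c A B) \<longleftrightarrow> True"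
| "clausal X \<longleftrightarrow> clause X"

fun no_complementary :: "cirq \<Rightarrow> bool" where
  "no_complementary (And A B) \<longleftrightarrow> no_complementary A \<and> no_complementary B"
| "no_complementary (Cand c A B) \<longleftrightarrow> True"
| "no_complementary X \<longleftrightarrow> (\<forall>p. \<not> (Pos p \<in> disjuncts X \<and> Neg p \<in> disjuncts X))"

definition some_conjunct_not_cand :: "cirq \<Rightarrow> bool" where
  "some_conjunct_not_cand D \<longleftrightarrow> (\<forall>A B. D = And A B \<longrightarrow> (\<exists>E\<in>conjuncts D. \<not> is_cand E))"

fun conj_ctx :: "ctx \<Rightarrow> bool" where
  "conj_ctx Hole \<longleftrightarrow> True"
| "conj_ctx (CAndL X _) \<longleftrightarrow> conj_ctx X"
| "conj_ctx (CAndR _ X) \<longleftrightarrow> conj_ctx X"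
| "conj_ctx _ \<longleftrightarrow> False"

lemma surf_subs_fill_unit:
  "U \<in> {Top, Bot} \<Longrightarrow> U \<notin> surf_subs (fill X E) \<Longrightarrow> (U \<notin> surf_subs E \<Longrightarrow> U \<notin> surf_subs E') \<Longrightarrow>
    U \<notin> surf_subs (fill X E')"
  by (induction X) auto

lemma surface_isolated_fill:
  assumes "surface_isolated U (fill X E)" "U \<in> {Top, Bot}" "E \<noteq> U"
    and "U \<notin> surf_subs E \<Longrightarrow> U \<notin> surf_subs E'"
  shows "surface_isolated U (fill X E')"
proof -
  have "fill X E \<noteq> U"
    using assms(2,3) fill_eq_atom by auto
  then have "U \<notin> surf_subs (fill X E)"
    using assms(1) by (simp add: surface_isolated_def)
  then show ?thesis
    using surf_subs_fill_unit[OF assms(2) _ assms(4)] by (simp add: surface_isolated_def)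
qed

lemma and_free_fill: "and_free (fill X E) \<Longrightarrow> (and_free E \<Longrightarrow> and_free E') \<Longrightarrow> and_free (fill X E')"
  by (induction X) auto

lemma cnf_fill:
  "cnf (fill X E) \<Longrightarrow> (cnf E \<Longrightarrow> cnf E') \<Longrightarrow> (and_free E \<Longrightarrow> and_free E') \<Longrightarrow> cnf (fill X E')"
  by (induction X) (auto intro: and_free_fill)

lemma clause_fill: "clause (fill X E) \<Longrightarrow> (clause E \<Longrightarrow> clause E') \<Longrightarrow> clause (fill X E')"
  by (induction X) auto

lemma clausal_fill:
  "clausal (fill X E) \<Longrightarrow> (clausal E \<Longrightarrow> clausal E') \<Longrightarrow> (clause E \<Longrightarrow> clause E') \<Longrightarrow>
    clausal (fill X E')"
  by (induction X) (auto intro: clause_fill)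

lemma clause_fill_And: "surface_ctx X \<Longrightarrow> \<not> clause (fill X (And P Q))"
  by (induction X) auto

lemma conj_ctx_if_clausal: "surface_ctx X \<Longrightarrow> clausal (fill X (And P Q)) \<Longrightarrow> conj_ctx X"
  by (induction X) (auto simp: clause_fill_And)

lemma literal_disjuncts_fill:
  assumes "\<And>L. L \<in> disjuncts E' \<Longrightarrow> (\<exists>p. L = Pos p \<or> L = Neg p) \<Longrightarrow> L \<in> disjuncts E"
  shows "L \<in> disjuncts (fill X E') \<Longrightarrow> (\<exists>p. L = Pos p \<or> L = Neg p) \<Longrightarrow> L \<in> disjuncts (fill X E)"
  using assms by (induction X) auto

lemma no_complementary_fill:
  assumes "\<And>L. L \<in> disjuncts E' \<Longrightarrow> (\<exists>p. L = Pos p \<or> L = Neg p) \<Longrightarrow> L \<in> disjuncts E"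
  shows "no_complementary (fill X E) \<Longrightarrow> (no_complementary E \<Longrightarrow> no_complementary E') \<Longrightarrow>
    no_complementary (fill X E')"
proof (induction X)
  case (COrL X B)
  then show ?case using literal_disjuncts_fill[OF assms, where X = X] by auto
next
  case (COrR B X)
  then show ?case using literal_disjuncts_fill[OF assms, where X = X] by auto
qed auto

lemma no_complementary_fill_conj_ctx:
  "conj_ctx X \<Longrightarrow> no_complementary (fill X E) \<Longrightarrow> (no_complementary E \<Longrightarrow> no_complementary E') \<Longrightarrow>
    no_complementary (fill X E')"
  by (induction X) auto

definition closed_under_surface_ctx :: "(cirq \<Rightarrow> cirq \<Rightarrow> bool) \<Rightarrow> bool" where
  "closed_under_surface_ctx r \<longleftrightarrow> (\<forall>A E Y. r A E \<longrightarrow> surface_ctx Y \<longrightarrow> r (fill Y A) (fill Y E))"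

lemma closed_under_surface_ctx_steps:
  "closed_under_surface_ctx s1a" "closed_under_surface_ctx s1b" "closed_under_surface_ctx s2"
  "closed_under_surface_ctx s3" "closed_under_surface_ctx s4" "closed_under_surface_ctx s5a"
  "closed_under_surface_ctx s5b"
  unfolding closed_under_surface_ctx_def
  by (simp_all only: s1a_def s1b_def s2_def s3_def s4_def s5a_def s5b_def)
    (metis fill_ctx_comp surface_ctx_comp)+

lemma redex_free_subterms:
  assumes "closed_under_surface_ctx r"
  shows "redex_free r (Or A B) \<Longrightarrow> redex_free r A" "redex_free r (Or A B) \<Longrightarrow> redex_free r B"
    "redex_free r (And A B) \<Longrightarrow> redex_free r A" "redex_free r (And A B) \<Longrightarrow> redex_free r B"
proof -
  have "redex_free r (fill Y D) \<Longrightarrow> redex_free r D" if "surface_ctx Y" for Y D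
    using assms that unfolding closed_under_surface_ctx_def redex_free_def by blast
  from this[of "COrL Hole B" A] this[of "COrR A Hole" B] this[of "CAndL Hole B" A] this[of "CAndR A Hole" B]
  show "redex_free r (Or A B) \<Longrightarrow> redex_free r A" "redex_free r (Or A B) \<Longrightarrow> redex_free r B"
    "redex_free r (And A B) \<Longrightarrow> redex_free r A" "redex_free r (And A B) \<Longrightarrow> redex_free r B"
    by simp_all
qed

lemma surface_isolated_Bot_steps:
  assumes "surface_isolated Bot D"
  shows "s2 D D' \<Longrightarrow> surface_isolated Bot D'" "s3 D D' \<Longrightarrow> surface_isolated Bot D'"
    "s4 D D' \<Longrightarrow> surface_isolated Bot D'" "s5a D D' \<Longrightarrow> surface_isolated Bot D'"
    "s5b D D' \<Longrightarrow> surface_isolated Bot D'" "s6 D D' \<Longrightarrow> surface_isolated Bot D'"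
  using assms unfolding s2_def s3_def s4_def s5a_def s5b_def s6_def
  by (auto elim!: surface_isolated_fill)

lemma surface_isolated_Top_s6: "s6 D D' \<Longrightarrow> surface_isolated Top D \<Longrightarrow> surface_isolated Top D'"
  unfolding s6_def by (auto elim!: surface_isolated_fill)

lemma cnf_s3: "s3 D D' \<Longrightarrow> cnf D \<Longrightarrow> cnf D'"
  unfolding s3_def by (auto elim!: cnf_fill)

lemma clausal_steps:
  assumes "clausal D"
  shows "s4 D D' \<Longrightarrow> clausal D'" "s5a D D' \<Longrightarrow> clausal D'" "s5b D D' \<Longrightarrow> clausal D'"
    "s6 D D' \<Longrightarrow> clausal D'"
  using assms unfolding s4_def s5a_def s5b_def s6_def by (auto elim!: clausal_fill)

lemma no_complementary_steps:
  assumes "clausal D" "no_complementary D"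
  shows "s5a D D' \<Longrightarrow> no_complementary D'" "s5b D D' \<Longrightarrow> no_complementary D'"
    "s6 D D' \<Longrightarrow> no_complementary D'"
proof -
  show "s5a D D' \<Longrightarrow> no_complementary D'"
    using assms(2) unfolding s5a_def by (auto elim!: no_complementary_fill[rotated])
  show "s5b D D' \<Longrightarrow> no_complementary D'" "s6 D D' \<Longrightarrow> no_complementary D'"
    using assms conj_ctx_if_clausal unfolding s5b_def s6_def
    by (auto elim!: no_complementary_fill_conj_ctx[rotated])
qed

lemma root_redexes:
  "s1a (Or Bot A) A" "s1a (Or A Bot) A" "s1b (And Bot A) Bot" "s1b (And A Bot) Bot"
  "s2 (Or (And A B) C) (And (Or A C) (Or B C))" "s2 (Or C (And A B)) (And (Or A C) (Or B C))"
  "s3 (Or (Cand c A B) C) (Cand c (Or A C) (Or B C))" "s3 (Or C (Cand c A B)) (Cand c (Or A C) (Or B C))"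
  "s5a (Or Top A) Top" "s5a (Or A Top) Top" "s5b (And Top A) A" "s5b (And A Top) A"
proof -
  show "s1a (Or Bot A) A" "s1a (Or A Bot) A"
    unfolding s1a_def by (intro exI[of _ Hole] exI[of _ A]; simp)+
  show "s1b (And Bot A) Bot" "s1b (And A Bot) Bot"
    unfolding s1b_def by (intro exI[of _ Hole] exI[of _ A]; simp)+
  show "s2 (Or (And A B) C) (And (Or A C) (Or B C))" "s2 (Or C (And A B)) (And (Or A C) (Or B C))"
    unfolding s2_def by (intro exI[of _ Hole] exI[of _ A] exI[of _ B] exI[of _ C]; simp)+
  show "s3 (Or (Cand c A B) C) (Cand c (Or A C) (Or B C))"
    "s3 (Or C (Cand c A B)) (Cand c (Or A C) (Or B C))"
    unfolding s3_def by (intro exI[of _ Hole] exI[of _ c] exI[of _ A] exI[of _ B] exI[of _ C]; simp)+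
  show "s5a (Or Top A) Top" "s5a (Or A Top) Top"
    unfolding s5a_def by (intro exI[of _ Hole] exI[of _ A]; simp)+
  show "s5b (And Top A) A" "s5b (And A Top) A"
    unfolding s5b_def by (intro exI[of _ Hole] exI[of _ A]; simp)+
qed

lemma not_redex_free: "r D E \<Longrightarrow> \<not> redex_free r D"
  by (auto simp: redex_free_def)

lemma not_redex_free_roots:
  "\<not> redex_free s1a (Or Bot A)" "\<not> redex_free s1a (Or A Bot)"
  "\<not> redex_free s1b (And Bot A)" "\<not> redex_free s1b (And A Bot)"
  "\<not> redex_free s2 (Or (And A B) C)" "\<not> redex_free s2 (Or C (And A B))"
  "\<not> redex_free s3 (Or (Cand c A B) C)" "\<not> redex_free s3 (Or C (Cand c A B))"
  "\<not> redex_free s5a (Or Top A)" "\<not> redex_free s5a (Or A Top)"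
  "\<not> redex_free s5b (And Top A)" "\<not> redex_free s5b (And A Top)"
  by (rule not_redex_free, rule root_redexes)+

lemma s4_root: "Pos p \<in> disjuncts (Or A B) \<Longrightarrow> Neg p \<in> disjuncts (Or A B) \<Longrightarrow> s4 (Or A B) Top"
  unfolding s4_def by (rule exI[of _ Hole]) auto

lemma s7_roots:
  "s7 (Cand c (fill X (Cand c E F)) A) (Cand c (fill X E) A)"
  "s7 (Cand c A (fill X (Cand c E F))) (Cand c A (fill X F))"
  unfolding s7_def by blast+

lemma surface_isolated_Bot_if_redex_free:
  "redex_free s1a D \<Longrightarrow> redex_free s1b D \<Longrightarrow> surface_isolated Bot D"
proof (induction D)
  case (Or A B)
  have "redex_free s1a A" "redex_free s1a B" "redex_free s1b A" "redex_free s1b B"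
    using Or.prems redex_free_subterms[OF closed_under_surface_ctx_steps(1)]
      redex_free_subterms[OF closed_under_surface_ctx_steps(2)] by blast+
  moreover have "A \<noteq> Bot" "B \<noteq> Bot"
    using Or.prems(1) not_redex_free_roots(1,2) by auto
  ultimately show ?case
    using Or.IH by (auto simp: surface_isolated_def)
next
  case (And A B)
  have "redex_free s1a A" "redex_free s1a B" "redex_free s1b A" "redex_free s1b B"
    using And.prems redex_free_subterms[OF closed_under_surface_ctx_steps(1)]
      redex_free_subterms[OF closed_under_surface_ctx_steps(2)] by blast+
  moreover have "A \<noteq> Bot" "B \<noteq> Bot"
    using And.prems(2) not_redex_free_roots(3,4) by auto
  ultimately show ?case
    using And.IH by (auto simp: surface_isolated_def)
qed (auto simp: surface_isolated_def)

lemma surface_isolated_Top_if_redex_free: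
  "redex_free s5a D \<Longrightarrow> redex_free s5b D \<Longrightarrow> surface_isolated Top D"
proof (induction D)
  case (Or A B)
  have "redex_free s5a A" "redex_free s5a B" "redex_free s5b A" "redex_free s5b B"
    using Or.prems redex_free_subterms[OF closed_under_surface_ctx_steps(6)]
      redex_free_subterms[OF closed_under_surface_ctx_steps(7)] by blast+
  moreover have "A \<noteq> Top" "B \<noteq> Top"
    using Or.prems(1) not_redex_free_roots(9,10) by auto
  ultimately show ?case
    using Or.IH by (auto simp: surface_isolated_def)
next
  case (And A B)
  have "redex_free s5a A" "redex_free s5a B" "redex_free s5b A" "redex_free s5b B"
    using And.prems redex_free_subterms[OF closed_under_surface_ctx_steps(6)]
      redex_free_subterms[OF closed_under_surface_ctx_steps(7)] by blast+
  moreover have "A \<noteq> Top" "B \<noteq> Top"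
    using And.prems(2) not_redex_free_roots(11,12) by auto
  ultimately show ?case
    using And.IH by (auto simp: surface_isolated_def)
qed (auto simp: surface_isolated_def)

lemma cnf_if_and_free: "and_free X \<Longrightarrow> cnf X"
  by (cases X) auto

lemma and_free_if_cnf: "cnf X \<Longrightarrow> \<forall>P Q. X \<noteq> And P Q \<Longrightarrow> and_free X"
  by (cases X) auto

lemma clause_if_clausal: "clausal X \<Longrightarrow> and_free X \<Longrightarrow> \<forall>c P Q. X \<noteq> Cand c P Q \<Longrightarrow> clause X"
  by (cases X) auto

lemma cnf_if_redex_free: "redex_free s2 D \<Longrightarrow> cnf D"
proof (induction D)
  case (Or A B)
  have "redex_free s2 A" "redex_free s2 B"
    using Or.prems redex_free_subterms[OF closed_under_surface_ctx_steps(3)] by blast+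
  then have "cnf A" "cnf B"
    using Or.IH by blast+
  moreover have "\<forall>P Q. A \<noteq> And P Q" "\<forall>P Q. B \<noteq> And P Q"
    using Or.prems not_redex_free_roots(5,6) by auto
  ultimately show ?case
    using and_free_if_cnf by simp
next
  case (And A B)
  have "redex_free s2 A" "redex_free s2 B"
    using And.prems redex_free_subterms[OF closed_under_surface_ctx_steps(3)] by blast+
  then show ?case
    using And.IH by simp
qed simp_all

lemma clausal_if_redex_free: "cnf D \<Longrightarrow> redex_free s3 D \<Longrightarrow> clausal D"
proof (induction D)
  case (Or A B)
  have "redex_free s3 A" "redex_free s3 B"
    using Or.prems(2) redex_free_subterms[OF closed_under_surface_ctx_steps(4)] by blast+
  moreover have "and_free A" "and_free B"
    using Or.prems(1) by auto
  moreover from this have "cnf A" "cnf B"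
    by (simp_all add: cnf_if_and_free)
  ultimately have "clausal A" "clausal B"
    using Or.IH by blast+
  moreover have "\<forall>c P Q. A \<noteq> Cand c P Q" "\<forall>c P Q. B \<noteq> Cand c P Q"
    using Or.prems(2) not_redex_free_roots(7,8) by auto
  ultimately show ?case
    using clause_if_clausal \<open>and_free A\<close> \<open>and_free B\<close> by simp
next
  case (And A B)
  have "redex_free s3 A" "redex_free s3 B"
    using And.prems(2) redex_free_subterms[OF closed_under_surface_ctx_steps(4)] by blast+
  then show ?case
    using And.IH And.prems(1) by simp
qed simp_all

lemma no_complementary_if_redex_free: "redex_free s4 D \<Longrightarrow> no_complementary D"
proof (induction D)
  case (Or A B)
  show ?case
  proof (rule ccontr)
    assume "\<not> no_complementary (Or A B)"
    then obtain p where "Pos p \<in> disjuncts (Or A B)" "Neg p \<in> disjuncts (Or A B)"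
      by auto
    then show False
      using Or.prems s4_root unfolding redex_free_def by blast
  qed
next
  case (And A B)
  have "redex_free s4 A" "redex_free s4 B"
    using And.prems redex_free_subterms[OF closed_under_surface_ctx_steps(5)] by blast+
  then show ?case
    using And.IH by simp
qed simp_all

lemma ex_quadrilemma_redex:
  "\<forall>E\<in>conjuncts T. is_cand E \<Longrightarrow> \<not> is_cand T \<Longrightarrow>
    \<exists>X a A B b E F. surface_ctx X \<and> T = fill X (And (Cand a A B) (Cand b E F))"
proof (induction T)
  case (And T1 T2)
  consider "\<not> is_cand T1" | "\<not> is_cand T2" | "is_cand T1" "is_cand T2"
    by blast
  then show ?case
  proof cases
    case 1
    then obtain X a A B b E F where "surface_ctx X" "T1 = fill X (And (Cand a A B) (Cand b E F))"
      using And.IH(1) And.prems(1) by auto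
    then show ?thesis
      by (intro exI[of _ "CAndL X T2"]) auto
  next
    case 2
    then obtain X a A B b E F where "surface_ctx X" "T2 = fill X (And (Cand a A B) (Cand b E F))"
      using And.IH(2) And.prems(1) by auto
    then show ?thesis
      by (intro exI[of _ "CAndR T1 X"]) auto
  next
    case 3
    then obtain a A B b E F where "T1 = Cand a A B" "T2 = Cand b E F"
      by (cases T1; cases T2) auto
    then show ?thesis
      by (intro exI[of _ Hole]) auto
  qed
qed auto

lemma some_conjunct_not_cand_if_redex_free: "redex_free s6 D \<Longrightarrow> some_conjunct_not_cand D"
  unfolding some_conjunct_not_cand_def
proof (intro allI impI)
  fix A B assume free: "redex_free s6 D" and D: "D = And A B"
  show "\<exists>E\<in>conjuncts D. \<not> is_cand E"
  proof (rule ccontr)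
    assume "\<not> (\<exists>E\<in>conjuncts D. \<not> is_cand E)"
    then obtain X a A B b E F where X: "surface_ctx X" "D = fill X (And (Cand a A B) (Cand b E F))"
      using ex_quadrilemma_redex[of D] D by auto
    obtain c where c: "Conj c \<notin> clusters D"
      using ex_fresh_Conj by blast
    have "s6 D (fill X (Cand c (Cand a (And A (Cand b E F)) (And B (Cand b E F)))
                            (Cand b (And (Cand a A B) E) (And (Cand a A B) F))))"
      unfolding s6_def using X c by blast
    then show False
      using free unfolding redex_free_def by blast
  qed
qed

lemma fresh_components_if_redex_free:
  assumes "redex_free s7 (Cand c A B)"
  shows "Conj c \<notin> clusters A" "Conj c \<notin> clusters B"
  using assms ex_Cand_ctx_if_Conj_in_clusters s7_roots unfolding redex_free_def by metis+

lemma clause_surf_subs: "clause X \<Longrightarrow> Y \<in> surf_subs X \<Longrightarrow> clause Y \<and> disjuncts Y \<subseteq> disjuncts X"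
  by (induction X) auto

lemma clause_if_Or_in_surf_subs: "clausal D \<Longrightarrow> Or A B \<in> surf_subs D \<Longrightarrow> clause (Or A B)"
  by (induction D) (auto dest: clause_surf_subs)

lemma no_complementary_Or_in_surf_subs:
  "clausal D \<Longrightarrow> no_complementary D \<Longrightarrow> Or A B \<in> surf_subs D \<Longrightarrow>
    \<not> (Pos p \<in> disjuncts (Or A B) \<and> Neg p \<in> disjuncts (Or A B))"
proof (induction D)
  case (Or D1 D2)
  have "clause (Or D1 D2)"
    using Or.prems(1) by simp
  then have "disjuncts (Or A B) \<subseteq> disjuncts (Or D1 D2)"
    using clause_surf_subs Or.prems(3) by blast
  then show ?case
    using Or.prems(2) by auto
qed auto

lemma pure_if_invariants:
  assumes "surface_isolated Bot D" "clausal D" "no_complementary D" "surface_isolated Top D"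
    "some_conjunct_not_cand D" "\<not> is_cand D"
  shows "pure D"
  unfolding pure_def
proof (intro conjI allI impI)
  show "Bot \<in> surf_subs D \<Longrightarrow> D = Bot" "Top \<in> surf_subs D \<Longrightarrow> D = Top"
    using assms(1,4) by (simp_all add: surface_isolated_def)
  show "\<exists>E\<in>conjuncts D. \<not> is_cand E" if "D = And A B" for A B
    using assms(5) that by (simp add: some_conjunct_not_cand_def)
  show "And E F \<notin> surf_subs A \<union> surf_subs B" "Cand c E F \<notin> surf_subs A \<union> surf_subs B"
    if "Or A B \<in> surf_subs D" for A B c E F
    using clause_if_Or_in_surf_subs[OF assms(2) that] clause_surf_subs by fastforce+
  show "\<not> (Pos p \<in> disjuncts (Or A B) \<and> Neg p \<in> disjuncts (Or A B))"
    if "Or A B \<in> surf_subs D" for A B p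
    using no_complementary_Or_in_surf_subs[OF assms(2,3) that] .
  show "Conj c \<notin> clusters A" "Conj c \<notin> clusters B" if "D = Cand c A B" for c A B
    using assms(6) that by simp_all
qed

lemma pure_Cand: "Conj c \<notin> clusters A \<Longrightarrow> Conj c \<notin> clusters B \<Longrightarrow> pure (Cand c A B)"
  unfolding pure_def by auto

lemma purification_stage1:
  assumes "loop (opt_step s1a OO opt_step s1b) A D"
  shows "surface_isolated Bot D"
  using loop_opt_step_OO_redex_free[OF assms s1a_shrinks s1b_shrinks]
  by (blast intro: surface_isolated_Bot_if_redex_free)

lemma purification_stage2:
  assumes "loop (opt_step s2) D D'" "surface_isolated Bot D"
  shows "surface_isolated Bot D' \<and> cnf D'"
  using loop_opt_step_invariant[where P = "surface_isolated Bot", OF assms] surface_isolated_Bot_steps(1)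
    cnf_if_redex_free[OF loop_opt_step_redex_free[OF assms(1) s2_changes]]
  by blast

lemma purification_stage3:
  assumes "loop (opt_step s3) D D'" "surface_isolated Bot D \<and> cnf D"
  shows "surface_isolated Bot D' \<and> clausal D'"
proof -
  have "surface_isolated Bot D' \<and> cnf D'"
    using loop_opt_step_invariant[where P = "\<lambda>D. surface_isolated Bot D \<and> cnf D", OF assms]
      surface_isolated_Bot_steps(2) cnf_s3 by blast
  then show ?thesis
    using clausal_if_redex_free loop_opt_step_redex_free[OF assms(1) s3_changes] by blast
qed

lemma purification_stage4:
  assumes "loop (opt_step s4) D D'" "surface_isolated Bot D \<and> clausal D"
  shows "surface_isolated Bot D' \<and> clausal D' \<and> no_complementary D'"
  using loop_opt_step_invariant[where P = "\<lambda>D. surface_isolated Bot D \<and> clausal D", OF assms]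
    surface_isolated_Bot_steps(3) clausal_steps(1)
    no_complementary_if_redex_free[OF loop_opt_step_redex_free[OF assms(1) s4_changes]]
  by blast

lemma purification_stage5:
  assumes "loop (opt_step s5a OO opt_step s5b) D D'"
    "surface_isolated Bot D \<and> clausal D \<and> no_complementary D"
  shows "surface_isolated Bot D' \<and> clausal D' \<and> no_complementary D' \<and> surface_isolated Top D'"
proof -
  have "surface_isolated Bot D' \<and> clausal D' \<and> no_complementary D'"
    using loop_opt_step_OO_invariant[where P = "\<lambda>D. surface_isolated Bot D \<and> clausal D \<and> no_complementary D",
        OF assms] surface_isolated_Bot_steps(4,5) clausal_steps(2,3) no_complementary_steps(1,2) by blast
  moreover have "surface_isolated Top D'"
    using loop_opt_step_OO_redex_free[OF assms(1) s5a_shrinks s5b_shrinks]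
    by (blast intro: surface_isolated_Top_if_redex_free)
  ultimately show ?thesis by blast
qed

lemma purification_stage6:
  assumes "loop (opt_step s6) D D'"
    "surface_isolated Bot D \<and> clausal D \<and> no_complementary D \<and> surface_isolated Top D"
  shows "surface_isolated Bot D' \<and> clausal D' \<and> no_complementary D' \<and> surface_isolated Top D' \<and>
    some_conjunct_not_cand D'"
  using loop_opt_step_invariant[where P = "\<lambda>D. surface_isolated Bot D \<and> clausal D \<and> no_complementary D \<and>
      surface_isolated Top D", OF assms] surface_isolated_Bot_steps(6) clausal_steps(4)
    no_complementary_steps(3) surface_isolated_Top_s6
    some_conjunct_not_cand_if_redex_free[OF loop_opt_step_redex_free[OF assms(1) s6_changes]]
  by blast

lemma purification_stage7:
  assumes "loop (opt_step s7) D D'" and "\<not> is_cand D \<Longrightarrow> pure D"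
  shows "pure D'"
proof (cases "is_cand D")
  case True
  have "is_cand D'"
    using assms(1) True by (rule loop_opt_step_invariant) (auto simp: s7_def)
  then obtain c A B where "D' = Cand c A B"
    by (cases D') auto
  then show ?thesis
    using fresh_components_if_redex_free loop_opt_step_redex_free[OF assms(1) s7_changes] pure_Cand
    by simp
next
  case False
  have "D' = D"
    using assms(1) refl by (rule loop_opt_step_invariant) (use False in \<open>auto simp: s7_def\<close>)
  then show ?thesis
    using assms(2) False by simp
qed

lemma pure_purification: "purification A B \<Longrightarrow> pure B"
  unfolding purification_def
proof (elim exE conjE)
  fix D1 D2 D3 D4 D5 D6
  assume "loop (opt_step s1a OO opt_step s1b) A D1" "loop (opt_step s2) D1 D2"
    "loop (opt_step s3) D2 D3" "loop (opt_step s4) D3 D4"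
    "loop (opt_step s5a OO opt_step s5b) D4 D5" "loop (opt_step s6) D5 D6"
    and stage7: "loop (opt_step s7) D6 B"
  then have "surface_isolated Bot D6 \<and> clausal D6 \<and> no_complementary D6 \<and> surface_isolated Top D6 \<and>
      some_conjunct_not_cand D6"
    by (meson purification_stage1 purification_stage2 purification_stage3 purification_stage4
        purification_stage5 purification_stage6)
  then show "pure B"
    using stage7 by (blast intro: purification_stage7 pure_if_invariants)
qed

theorem lemma7p5:
  assumes "purification A B"
  shows "(provable B \<longrightarrow> provable A) \<and> (valid A \<longleftrightarrow> valid B) \<and> pure B \<and> rank B \<le> rank A"
  using faithful_purification[OF assms] pure_purification[OF assms] unfolding faithful_def by blast

end
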